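(* Let $\Xi$ be any scale limit and $f$ be any scaling function. Then there exists a sequence of permutations which converges at scale $f$ to $\Xi$.
   Context: A scaling function is a function $f:\mathbb{N}\to\mathbb{R}^+$ with $f(n)\le n$ for all $n$, $f(n)\to\infty$ and $f(n)/n\to 0$. Let $S_n$ be the set of permutations of $[n]=\{1,\dots,n\}$ and $S=\bigcup_n S_n$. An occurrence of a pattern $\pi\in S_k$ in $\sigma\in S_n$ is a $k$-element set of indices $i_1<\dots<i_k$ such that $\sigma(i_1)\dots\sigma(i_k)$ is order-isomorphic to $\pi$; its width is $i_k-i_1+1$. For real $f\in[k,n]$, $\rho_f(\pi,\sigma)$ is the number of occurrences of $\pi$ in $\sigma$ of width at most $f$ divided by the number of $k$-element subsets of $[n]$ of width at most $f$. A sequence $(\sigma_j)$ with $|\sigma_j|\to\infty$ converges at scale $f$ to $\Xi\in[0,1]^S$ if $\rho_{f(|\sigma_j|)}(\pi,\sigma_j)\to\Xi_\pi$ for every $\pi\in S$. A scale limit is a vector $\Xi\in[0,1]^S$ such that for some scaling function $g$ there is a sequence of permutations converging at scale $g$ to $\Xi$. *)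

theory Defs
  imports "HOL-Analysis.Analysis"
begin

text \<open>A permutation of [n] = {1..n} is represented by its one-line notation,
  a list of length n whose entries are exactly 1..n (each once).
  Entry i (1-based) is sg(i) = xs ! (i - 1).\<close>

definition is_perm :: "nat list \<Rightarrow> bool" where
  "is_perm xs \<longleftrightarrow> distinct xs \<and> set xs = {1..length xs}"

definition Perms :: "nat list set" where
  "Perms = {xs. is_perm xs \<and> length xs \<ge> 1}"

definition scaling_function :: "(nat \<Rightarrow> real) \<Rightarrow> bool" where
  "scaling_function f \<longleftrightarrow>
     (\<forall>n\<ge>1. 0 < f n \<and> f n \<le> real n) \<and>
     filterlim f at_top sequentially \<and>
     ((\<lambda>n. f n / real n) \<longlonglongrightarrow> 0)"

definition width :: "nat set \<Rightarrow> nat" where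
  "width I = Max I - Min I + 1"

definition occurrence :: "nat list \<Rightarrow> nat list \<Rightarrow> nat set \<Rightarrow> bool" where
  "occurrence pat sg I \<longleftrightarrow>
     I \<subseteq> {1..length sg} \<and> card I = length pat \<and>
     (let ix = sorted_list_of_set I in
       \<forall>a<length pat. \<forall>b<length pat.
         (sg ! (ix ! a - 1) < sg ! (ix ! b - 1) \<longleftrightarrow> pat ! a < pat ! b))"

definition windowed_subsets :: "nat \<Rightarrow> nat \<Rightarrow> real \<Rightarrow> nat set set" where
  "windowed_subsets n k f = {I. I \<subseteq> {1..n} \<and> card I = k \<and> real (width I) \<le> f}"

text \<open>rho_f(pi, sg); meaningful for k <= f <= n.\<close>
definition rho :: "real \<Rightarrow> nat list \<Rightarrow> nat list \<Rightarrow> real" where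
  "rho f pat sg =
     real (card {I \<in> windowed_subsets (length sg) (length pat) f. occurrence pat sg I})
     / real (card (windowed_subsets (length sg) (length pat) f))"

definition converges_at_scale ::
  "(nat \<Rightarrow> nat list) \<Rightarrow> (nat \<Rightarrow> real) \<Rightarrow> (nat list \<Rightarrow> real) \<Rightarrow> bool" where
  "converges_at_scale seq f Xi \<longleftrightarrow>
     (\<forall>j. is_perm (seq j)) \<and>
     filterlim (\<lambda>j. length (seq j)) at_top sequentially \<and>
     (\<forall>pat\<in>Perms. ((\<lambda>j. rho (f (length (seq j))) pat (seq j)) \<longlonglongrightarrow> Xi pat))"

text \<open>Xi in [0,1]^S: a function on S with values in [0,1] (values outside S are irrelevant).\<close>
definition scale_limit :: "(nat list \<Rightarrow> real) \<Rightarrow> bool" where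
  "scale_limit Xi \<longleftrightarrow>
     (\<forall>pat\<in>Perms. 0 \<le> Xi pat \<and> Xi pat \<le> 1) \<and>
     (\<exists>g. scaling_function g \<and> (\<exists>seq. converges_at_scale seq g Xi))"

end

theory Submission
  imports Defs
begin

text \<open>Let sg_j converge to Xi at scale g, with m = length sg_j and h = g m. For i \<ge> 1 pick n with
  f n \<ge> (i + 2) h and f n (i + 1) m \<le> n h, and put t = floor (f n), H = floor h, c = t div H.
  The permutation of length n built from n div (c m) copies of the c-inflation of sg_j, placed as a
  direct sum and padded by fixed points, is compared with sg_j: each k-set of width at most H in
  sg_j lifts, in each copy, to c^k sets of width at most c H \<le> t with the same pattern; conversely
  every k-set of width at most t is such a lift of a set of width at most t div c + 2, unless it
  meets the padding or contains two points of one block or of different copies, and those sets are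
  rare. So pattern densities at scale t there and at scale H in sg_j differ by
  O(1/i + 1/H + H/m), which tends to 0.\<close>

definition windowed_count :: "nat \<Rightarrow> nat \<Rightarrow> nat \<Rightarrow> (nat set \<Rightarrow> bool) \<Rightarrow> nat" where
  "windowed_count n k t P = card {I. I \<subseteq> {1..n} \<and> card I = k \<and> width I \<le> t \<and> P I}"

lemma finite_subsets_atLeastAtMost: "finite {I. I \<subseteq> {a..(b::nat)} \<and> Q I}"
  by (rule finite_subset[of _ "Pow {a..b}"]) auto

lemma rho_eq_windowed_count:
  assumes "0 \<le> f"
  shows "rho f pat sg = real (windowed_count (length sg) (length pat) (nat \<lfloor>f\<rfloor>) (occurrence pat sg))
     / real (windowed_count (length sg) (length pat) (nat \<lfloor>f\<rfloor>) (\<lambda>_. True))"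
proof -
  have "real w \<le> f \<longleftrightarrow> w \<le> nat \<lfloor>f\<rfloor>" for w :: nat
    using assms by (simp add: le_nat_iff le_floor_iff)
  then show ?thesis
    unfolding rho_def windowed_count_def windowed_subsets_def by (simp add: conj_ac)
qed

lemma width_le_interval:
  assumes "I \<subseteq> {a..b}" "I \<noteq> {}"
  shows "width I \<le> b + 1 - a"
proof -
  have "finite I" using assms(1) finite_subset by blast
  then have "Max I \<le> b" "a \<le> Min I" "Min I \<le> Max I" using assms by auto
  then show ?thesis unfolding width_def by linarith
qed

lemma dist_le_width:
  assumes "finite I" "x \<in> I" "z \<in> I" "width I \<le> t"
  shows "z \<le> x + t" "x \<le> z + t"
proof -
  have "Min I \<le> x" "x \<le> Max I" "Min I \<le> z" "z \<le> Max I" using assms by auto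
  then show "z \<le> x + t" "x \<le> z + t" using assms(4) unfolding width_def by linarith+
qed

lemma card_supersets_le_choose:
  assumes "finite A" "finite X"
  shows "card {I. I \<subseteq> A \<and> card I = k \<and> X \<subseteq> I} \<le> card A choose (k - card X)"
proof -
  let ?F = "{I. I \<subseteq> A \<and> card I = k \<and> X \<subseteq> I}"
  let ?B = "{B. B \<subseteq> A \<and> card B = k - card X}"
  have "inj_on (\<lambda>I. I - X) ?F" by (rule inj_onI) auto
  moreover have "(\<lambda>I. I - X) ` ?F \<subseteq> ?B"
  proof
    fix B assume "B \<in> (\<lambda>I. I - X) ` ?F"
    then obtain I where I: "I \<subseteq> A" "card I = k" "X \<subseteq> I" "B = I - X" by auto
    have "finite I" using I(1) assms(1) finite_subset by blast
    then show "B \<in> ?B" using I card_Diff_subset assms(2) by auto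
  qed
  moreover have "finite ?B" by (rule finite_subset[of _ "Pow A"]) (use assms(1) in auto)
  ultimately have "card ?F \<le> card ?B" by (rule card_inj_on_le)
  also have "\<dots> = card A choose (k - card X)" using n_subsets[OF assms(1)] .
  finally show ?thesis .
qed

lemma windowed_count_le_all: "windowed_count n k t P \<le> windowed_count n k t (\<lambda>_. True)"
  unfolding windowed_count_def by (rule card_mono[OF finite_subsets_atLeastAtMost]) auto

lemma windowed_count_mono: "t1 \<le> t2 \<Longrightarrow> windowed_count n k t1 P \<le> windowed_count n k t2 P"
  unfolding windowed_count_def by (rule card_mono[OF finite_subsets_atLeastAtMost]) auto

lemma windowed_count_increment_le:
  assumes "t1 \<le> t2"
  shows "windowed_count n k t2 P + windowed_count n k t1 (\<lambda>_. True)
    \<le> windowed_count n k t1 P + windowed_count n k t2 (\<lambda>_. True)"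
proof -
  let ?S = "\<lambda>t P. {I. I \<subseteq> {1..n} \<and> card I = k \<and> width I \<le> t \<and> P I}"
  let ?All = "\<lambda>t. ?S t (\<lambda>_. True)"
  have "card (?S t2 P) \<le> card (?S t1 P \<union> (?All t2 - ?All t1))"
    by (intro card_mono finite_UnI finite_Diff finite_subsets_atLeastAtMost) auto
  also have "\<dots> \<le> card (?S t1 P) + card (?All t2 - ?All t1)"
    by (rule card_Un_le)
  also have "card (?All t2 - ?All t1) = card (?All t2) - card (?All t1)"
    by (rule card_Diff_subset) (use assms finite_subsets_atLeastAtMost in auto)
  finally have "card (?S t2 P) \<le> card (?S t1 P) + (card (?All t2) - card (?All t1))" .
  moreover have "card (?All t1) \<le> card (?All t2)"
    by (rule card_mono) (use assms finite_subsets_atLeastAtMost in auto)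
  ultimately show ?thesis unfolding windowed_count_def by simp
qed

text \<open>A set counted at width t2 but not at width t1 is determined by its extreme points
  a, a + w (with t1 \<le> w < t2) and k - 2 further points between them.\<close>
lemma windowed_count_widen_le:
  assumes "1 \<le> t1" "t1 \<le> t2" "2 \<le> k"
  shows "windowed_count n k t2 (\<lambda>_. True)
    \<le> windowed_count n k t1 (\<lambda>_. True) + n * (t2 - t1) * (t2 choose (k - 2))"
proof -
  let ?S = "\<lambda>t. {I. I \<subseteq> {1..n} \<and> card I = k \<and> width I \<le> t \<and> True}"
  let ?G = "\<lambda>a b. {I. I \<subseteq> {a..b} \<and> card I = k \<and> {a, b} \<subseteq> I}"
  have sub: "?S t2 - ?S t1 \<subseteq> (\<Union>a\<in>{1..n}. \<Union>b\<in>{a+t1..<a+t2}. ?G a b)"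
  proof
    fix I assume I: "I \<in> ?S t2 - ?S t1"
    then have "finite I" "I \<noteq> {}" using assms finite_subset[of I "{1..n}"] by auto
    then have "Min I \<in> I" "Max I \<in> I" "I \<subseteq> {Min I..Max I}" "Min I \<le> Max I" by auto
    with I show "I \<in> (\<Union>a\<in>{1..n}. \<Union>b\<in>{a+t1..<a+t2}. ?G a b)"
      unfolding width_def by (intro UN_I[of "Min I"] UN_I[of "Max I"]) auto
  qed
  have G: "card (?G a b) \<le> t2 choose (k - 2)" if "b \<in> {a+t1..<a+t2}" for a b
  proof -
    have "card {a, b} = 2" using that assms by auto
    then have "card (?G a b) \<le> card {a..b} choose (k - 2)"
      using card_supersets_le_choose[of "{a..b}" "{a, b}" k] by simp
    also have "\<dots> \<le> t2 choose (k - 2)" by (rule binomial_right_mono) (use that in auto)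
    finally show ?thesis .
  qed
  have "card (?S t2 - ?S t1) \<le> card (\<Union>a\<in>{1..n}. \<Union>b\<in>{a+t1..<a+t2}. ?G a b)"
    by (rule card_mono[OF _ sub]) (auto intro!: finite_subset[of _ "Pow {0..n+t2}"])
  also have "\<dots> \<le> (\<Sum>a\<in>{1..n}. \<Sum>b\<in>{a+t1..<a+t2}. card (?G a b))"
    by (rule order_trans[OF card_UN_le sum_mono]) (auto intro: card_UN_le)
  also have "\<dots> \<le> (\<Sum>a\<in>{1..n}. \<Sum>b\<in>{a+t1..<a+t2}. t2 choose (k - 2))"
    by (intro sum_mono G)
  also have "\<dots> = n * (t2 - t1) * (t2 choose (k - 2))" by simp
  finally have "card (?S t2 - ?S t1) \<le> n * (t2 - t1) * (t2 choose (k - 2))" .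
  moreover have "card (?S t2) \<le> card (?S t1) + card (?S t2 - ?S t1)"
    by (rule order_trans[OF card_mono card_Un_le])
       (auto intro: finite_UnI finite_Diff finite_subsets_atLeastAtMost)
  ultimately show ?thesis unfolding windowed_count_def by simp
qed

text \<open>Count the sets with minimum a \<le> n + 1 - t whose other points lie among the next t - 1 positions.\<close>
lemma windowed_count_ge:
  assumes "1 \<le> t" "1 \<le> k"
  shows "(n + 1 - t) * ((t - 1) choose (k - 1)) \<le> windowed_count n k t (\<lambda>_. True)"
proof -
  let ?R = "\<lambda>a. {S. S \<subseteq> {a+1..a+t-1} \<and> card S = k - 1}"
  let ?F = "\<lambda>a. insert a ` ?R a"
  have card_F: "card (?F a) = (t - 1) choose (k - 1)" for a
  proof -
    have "inj_on (insert a) (?R a)"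
    proof (rule inj_onI)
      fix S S' assume "S \<in> ?R a" "S' \<in> ?R a" "insert a S = insert a S'"
      moreover from calculation have "a \<notin> S" "a \<notin> S'" by auto
      ultimately show "S = S'" by (simp add: insert_ident)
    qed
    then have "card (?F a) = card (?R a)" by (rule card_image)
    also have "\<dots> = (t - 1) choose (k - 1)" using n_subsets[of "{a+1..a+t-1}"] by simp
    finally show ?thesis .
  qed
  have Min_F: "Min I = a" if I: "I \<in> ?F a" for I a
  proof -
    obtain S where "I = insert a S" "S \<subseteq> {a+1..a+t-1}" using I by auto
    moreover from calculation have "finite S" using finite_subset by blast
    ultimately show ?thesis by (auto intro!: Min_eqI)
  qed
  have disjoint: "?F a \<inter> ?F b = {}" if "a \<noteq> b" for a b
  proof (rule ccontr)
    assume "?F a \<inter> ?F b \<noteq> {}"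
    then obtain I where "I \<in> ?F a" "I \<in> ?F b" by blast
    then show False using Min_F[of I a] Min_F[of I b] that by simp
  qed
  have sub: "(\<Union>a\<in>{1..n+1-t}. ?F a) \<subseteq> {I. I \<subseteq> {1..n} \<and> card I = k \<and> width I \<le> t \<and> True}"
  proof
    fix I assume "I \<in> (\<Union>a\<in>{1..n+1-t}. ?F a)"
    then obtain a S where a: "a \<in> {1..n+1-t}" "S \<subseteq> {a+1..a+t-1}" "card S = k - 1" "I = insert a S"
      by auto
    have "finite S" "a \<notin> S" using a(2) finite_subset by auto
    then have "card I = k" using a assms by simp
    moreover have "I \<subseteq> {a..a+t-1}" using a assms(1) by auto
    moreover have "I \<subseteq> {1..n}"
    proof
      fix x assume "x \<in> I"
      with \<open>I \<subseteq> {a..a+t-1}\<close> have "a \<le> x" "x \<le> a + t - 1" by auto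
      with a(1) assms(1) show "x \<in> {1..n}" by auto
    qed
    moreover have "width I \<le> t" using width_le_interval[OF \<open>I \<subseteq> {a..a+t-1}\<close>] a assms by auto
    ultimately show "I \<in> {I. I \<subseteq> {1..n} \<and> card I = k \<and> width I \<le> t \<and> True}" by auto
  qed
  have "card (\<Union>a\<in>{1..n+1-t}. ?F a) = (\<Sum>a\<in>{1..n+1-t}. card (?F a))"
  proof (rule card_UN_disjoint)
    show "\<forall>a\<in>{1..n+1-t}. finite (?F a)" by (simp add: finite_subsets_atLeastAtMost)
  qed (use disjoint in simp_all)
  also have "\<dots> = (n + 1 - t) * ((t - 1) choose (k - 1))" using card_F by simp
  finally show ?thesis
    unfolding windowed_count_def using card_mono[OF finite_subsets_atLeastAtMost sub] by simp
qed

lemma rho_singleton_pattern: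
  assumes "length pat = 1" "1 \<le> f" "1 \<le> length sg"
  shows "rho f pat sg = 1"
proof -
  let ?t = "nat \<lfloor>f\<rfloor>"
  let ?All = "{I. I \<subseteq> {1..length sg} \<and> card I = 1 \<and> width I \<le> ?t \<and> True}"
  have "{I. I \<subseteq> {1..length sg} \<and> card I = 1 \<and> width I \<le> ?t \<and> occurrence pat sg I} = ?All"
  proof (intro Collect_cong conj_cong refl)
    fix I assume I: "I \<subseteq> {1..length sg}" "card I = 1"
    then obtain x where "I = {x}" using card_1_singleton_iff by (metis One_nat_def)
    then show "occurrence pat sg I = True" unfolding occurrence_def Let_def using I assms(1) by auto
  qed
  then have same: "windowed_count (length sg) 1 ?t (occurrence pat sg) = windowed_count (length sg) 1 ?t (\<lambda>_. True)"
    unfolding windowed_count_def by simp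
  have "1 \<le> ?t" using assms(2) by linarith
  then have "{1} \<in> ?All" using assms(3) by (simp add: width_def)
  then have "?All \<noteq> {}" by blast
  then have "0 < windowed_count (length sg) 1 ?t (\<lambda>_. True)"
    unfolding windowed_count_def by (simp add: card_gt_0_iff finite_subsets_atLeastAtMost)
  then show ?thesis using rho_eq_windowed_count[of f pat sg] same assms by simp
qed

lemma real_binomial_le_pow:
  assumes "real n \<le> x"
  shows "real (n choose j) \<le> x ^ j"
proof (cases "j \<le> n")
  case True
  have "real (n choose j) \<le> real n ^ j"
    using binomial_le_pow[OF True] by (metis of_nat_le_iff of_nat_power)
  also have "\<dots> \<le> x ^ j" using assms by (intro power_mono) auto
  finally show ?thesis .
next
  case False
  have "0 \<le> x" using assms of_nat_0_le_iff order_trans by blast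
  then show ?thesis using False by (simp add: binomial_eq_0)
qed

lemma windowed_count_ge_real:
  assumes "2 \<le> k" "2 * k \<le> H" "2 * H \<le> m"
  shows "real m / 2 * (real H / (2 * real k)) ^ (k - 1) \<le> real (windowed_count m k H (\<lambda>_. True))"
proof -
  have "real H / (2 * real k) \<le> real (H - 1) / real (k - 1)"
  proof -
    have "real H * real (k - 1) \<le> real H * real k" by (intro mult_left_mono) auto
    also have "\<dots> \<le> 2 * real (H - 1) * real k" using assms(1,2) by (intro mult_right_mono) auto
    finally have "real H * real (k - 1) \<le> real (H - 1) * (2 * real k)" by simp
    then show ?thesis using assms(1) by (simp add: divide_simps)
  qed
  then have "(real H / (2 * real k)) ^ (k - 1) \<le> (real (H - 1) / real (k - 1)) ^ (k - 1)"
    by (intro power_mono) auto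
  also have "\<dots> \<le> real ((H - 1) choose (k - 1))"
    by (rule binomial_ge_n_over_k_pow_k) (use assms in simp)
  finally have "real m / 2 * (real H / (2 * real k)) ^ (k - 1)
      \<le> real (m + 1 - H) * real ((H - 1) choose (k - 1))"
    using assms(3) by (intro mult_mono) auto
  also have "\<dots> \<le> real (windowed_count m k H (\<lambda>_. True))"
    using windowed_count_ge[of H k m] assms by (simp only: of_nat_mult[symmetric] of_nat_le_iff)
  finally show ?thesis .
qed

lemma windowed_count_widen_real_le:
  assumes k: "2 \<le> k" and H: "1 \<le> H" and Hs: "H \<le> s" and sH: "s + 2 \<le> 2 * H"
  shows "real (windowed_count m k (s + 2) (\<lambda>_. True)) - real (windowed_count m k H (\<lambda>_. True))
    \<le> real m * real (s + 2 - H) * (2 * real H) ^ (k - 2)"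
proof -
  have "windowed_count m k (s + 2) (\<lambda>_. True)
      \<le> windowed_count m k H (\<lambda>_. True) + m * (s + 2 - H) * ((s + 2) choose (k - 2))"
    using windowed_count_widen_le[of H "s + 2" k m] H Hs k by simp
  then have "real (windowed_count m k (s + 2) (\<lambda>_. True))
      \<le> real (windowed_count m k H (\<lambda>_. True) + m * (s + 2 - H) * ((s + 2) choose (k - 2)))"
    by (simp only: of_nat_le_iff)
  then have "real (windowed_count m k (s + 2) (\<lambda>_. True)) - real (windowed_count m k H (\<lambda>_. True))
      \<le> real m * real (s + 2 - H) * real ((s + 2) choose (k - 2))"
    by (simp only: of_nat_add of_nat_mult)
  also have "\<dots> \<le> real m * real (s + 2 - H) * (2 * real H) ^ (k - 2)"
  proof (intro mult_left_mono real_binomial_le_pow)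
    have "real (s + 2) \<le> real (2 * H)" using sH by (simp only: of_nat_le_iff)
    then show "real (s + 2) \<le> 2 * real H" by simp
  qed auto
  finally show ?thesis .
qed

lemma sorted_list_of_set_image_strict_mono:
  fixes f :: "nat \<Rightarrow> nat"
  assumes "finite I" "\<And>x y. x \<in> I \<Longrightarrow> y \<in> I \<Longrightarrow> x < y \<Longrightarrow> f x < f y"
  shows "sorted_list_of_set (f ` I) = map f (sorted_list_of_set I)"
proof (rule strict_sorted_equal)
  show "sorted_wrt (<) (sorted_list_of_set (f ` I))" by (rule strict_sorted_list_of_set)
  have s: "sorted_wrt (<) (sorted_list_of_set I)" by (rule strict_sorted_list_of_set)
  have "sorted_wrt (\<lambda>x y. f x < f y) (sorted_list_of_set I)"
    by (rule sorted_wrt_mono_rel[OF _ s]) (use assms in auto)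
  then show "sorted_wrt (<) (map f (sorted_list_of_set I))" by (simp add: sorted_wrt_map)
  show "set (sorted_list_of_set (f ` I)) = set (map f (sorted_list_of_set I))"
    using assms(1) by simp
qed

lemma card_window_supersets_le:
  fixes x :: nat
  assumes "x \<in> X" "finite X"
  shows "card {I. I \<subseteq> {x - t .. x + t} \<and> card I = k \<and> X \<subseteq> I} \<le> (2 * t + 1) choose (k - card X)"
proof -
  have "card {I. I \<subseteq> {x - t .. x + t} \<and> card I = k \<and> X \<subseteq> I} \<le> card {x - t .. x + t} choose (k - card X)"
    by (rule card_supersets_le_choose) (use assms in auto)
  also have "\<dots> \<le> (2 * t + 1) choose (k - card X)" by (rule binomial_right_mono) simp
  finally show ?thesis .
qed

lemma card_UN_window_supersets_le:
  fixes x :: "'a \<Rightarrow> nat"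
  assumes "finite A" "\<And>a. a \<in> A \<Longrightarrow> x a \<in> X a \<and> finite (X a) \<and> card (X a) = j"
  shows "card (\<Union>a\<in>A. {I. I \<subseteq> {x a - t .. x a + t} \<and> card I = k \<and> X a \<subseteq> I})
    \<le> card A * ((2 * t + 1) choose (k - j))"
proof -
  have "card (\<Union>a\<in>A. {I. I \<subseteq> {x a - t .. x a + t} \<and> card I = k \<and> X a \<subseteq> I})
      \<le> (\<Sum>a\<in>A. card {I. I \<subseteq> {x a - t .. x a + t} \<and> card I = k \<and> X a \<subseteq> I})"
    by (rule card_UN_le[OF assms(1)])
  also have "\<dots> \<le> (\<Sum>a\<in>A. (2 * t + 1) choose (k - j))"
    by (rule sum_mono) (use card_window_supersets_le assms(2) in fastforce)
  finally show ?thesis by simp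
qed

lemma ratio_diff_le:
  fixes a w x y d :: real
  assumes "0 \<le> a" "a \<le> w" "0 < w" "a \<le> x" "x \<le> a + d" "w \<le> y" "y \<le> w + d" "x \<le> y"
  shows "\<bar>x / y - a / w\<bar> \<le> d / w"
proof -
  have y: "0 < y" using assms by linarith
  have x0: "0 \<le> x" using assms by linarith
  have "x / y \<le> x / w" using x0 assms(3,6) by (intro divide_left_mono) auto
  also have "\<dots> \<le> (a + d) / w" using assms(3,5) by (intro divide_right_mono) auto
  finally have 1: "x / y - a / w \<le> d / w" by (simp add: diff_divide_distrib add_divide_distrib)
  have "a / y \<le> x / y" using y assms(4) by (intro divide_right_mono) auto
  have "a * (y - w) \<le> y * d" by (rule mult_mono) (use assms in auto)
  then have "a * (y - w) / (w * y) \<le> y * d / (w * y)" using assms(3) y by (intro divide_right_mono) auto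
  also have "y * d / (w * y) = d / w" using y by simp
  also have "a * (y - w) / (w * y) = a / w - a / y" using y assms(3) by (simp add: field_simps)
  finally have "a / w - a / y \<le> d / w" .
  then have 2: "a / w - x / y \<le> d / w" using \<open>a / y \<le> x / y\<close> by linarith
  show ?thesis using 1 2 by (simp add: abs_le_iff)
qed

definition blowup_error_const :: "nat \<Rightarrow> real" where
  "blowup_error_const k = 12 * (2 * real k) ^ (k - 1) * 6 ^ (k - 2)"

lemma blowup_error_const_nonneg: "0 \<le> blowup_error_const k"
  unfolding blowup_error_const_def by simp

text \<open>With Q = q c^k, the two error terms D/W and B/(QW) are of order d/H and 1/q + 1/H + H/m.\<close>
lemma blowup_error_le:
  fixes m H c q k :: nat and W D B d :: real
  assumes k: "2 \<le> k" and H: "4 \<le> H" and m: "0 < m" and c: "1 \<le> c" and q: "1 \<le> q" and d: "0 \<le> d"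
    and W: "real m / 2 * (real H / (2 * real k)) ^ (k - 1) \<le> W"
    and D: "0 \<le> D" "D \<le> real m * d * (2 * real H) ^ (k - 2)"
    and B: "0 \<le> B" "B \<le> real c * real m * (6 * real c * real H) ^ (k - 1)
        + (2 * real q * real c * real m * real c + real q * (2 * real c * real H) ^ 2)
          * (6 * real c * real H) ^ (k - 2)"
  shows "(real (q * c ^ k) * D + B) / (real (q * c ^ k) * W)
    \<le> blowup_error_const k * (d / real H + 1 / real q + 1 / real H + real H / real m)"
proof -
  obtain i where i: "k = i + 2" using k by (metis add.commute le_Suc_ex)
  define L where "L = real H"
  define kk where "kk = 2 * real k"
  define Q where "Q = real (q * c ^ k)"
  define G where "G = 6 * real c * L"
  define Z where "Z = real m / 2 * (L / kk) ^ (i + 1)"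
  have L4: "4 \<le> L" and kk4: "4 \<le> kk" using H k unfolding L_def kk_def by auto
  have Z_pos: "0 < Z" unfolding Z_def using L4 kk4 m by simp
  have Q_pos: "0 < Q" unfolding Q_def using c q by simp
  have ZW: "Z \<le> W" using W unfolding Z_def L_def kk_def i by simp
  have "(Q * D + B) / (Q * W) = D / W + B / (Q * W)" using Q_pos Z_pos ZW by (simp add: field_simps)
  also have "D / W \<le> (real m * d * (2 * L) ^ i) / Z"
    using D ZW Z_pos unfolding L_def i by (intro frac_le) auto
  also have "\<dots> = 2 * 2 ^ i * kk ^ (i + 1) * (d / L)"
    unfolding Z_def using m L4 kk4 by (simp add: field_simps power_mult_distrib power_divide)
  also have "B / (Q * W) \<le> (real c * real m * G ^ (i + 1)
      + (2 * real q * real c * real m * real c + real q * (2 * real c * L) ^ 2) * G ^ i) / (Q * Z)"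
    using B ZW Z_pos Q_pos unfolding G_def L_def i by (intro frac_le) auto
  also have "\<dots> = 12 * kk ^ (i + 1) * 6 ^ i * (1 / real q) + 4 * kk ^ (i + 1) * 6 ^ i * (1 / L)
      + 8 * kk ^ (i + 1) * 6 ^ i * (L / real m)"
    unfolding Z_def Q_def G_def i using m L4 kk4 c q
    by (simp add: field_simps power_mult_distrib power_divide power2_eq_square)
  also have "2 * 2 ^ i * kk ^ (i + 1) * (d / L) + (12 * kk ^ (i + 1) * 6 ^ i * (1 / real q)
      + 4 * kk ^ (i + 1) * 6 ^ i * (1 / L) + 8 * kk ^ (i + 1) * 6 ^ i * (L / real m))
    \<le> 12 * kk ^ (i + 1) * 6 ^ i * (d / L + 1 / real q + 1 / L + L / real m)"
  proof -
    define P where "P = kk ^ (i + 1) * 6 ^ i"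
    have P0: "0 \<le> P" unfolding P_def using kk4 by simp
    have "(2::real) ^ i \<le> 6 ^ i" by (rule power_mono) auto
    moreover have "(0::real) \<le> 6 ^ i" by simp
    ultimately have "(2::real) * 2 ^ i \<le> 12 * 6 ^ i" by linarith
    then have e1: "2 * 2 ^ i * kk ^ (i + 1) * (d / L) \<le> 12 * P * (d / L)"
      using d L4 kk4 unfolding P_def
      by (intro mult_right_mono) (auto simp: mult.commute mult.left_commute)
    have e2: "4 * P * (1 / L) \<le> 12 * P * (1 / L)" using P0 L4 by (intro mult_right_mono) auto
    have e3: "8 * P * (L / real m) \<le> 12 * P * (L / real m)" using P0 L4 by (intro mult_right_mono) auto
    have e4: "12 * P * (d / L + 1 / real q + 1 / L + L / real m)
       = 12 * P * (d / L) + 12 * P * (1 / real q) + 12 * P * (1 / L) + 12 * P * (L / real m)"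
      by (simp only: distrib_left)
    have e5: "12 * kk ^ (i + 1) * 6 ^ i * (1 / real q) + 4 * kk ^ (i + 1) * 6 ^ i * (1 / L)
        + 8 * kk ^ (i + 1) * 6 ^ i * (L / real m)
       = 12 * P * (1 / real q) + 4 * P * (1 / L) + 8 * P * (L / real m)"
      unfolding P_def by (simp only: mult.assoc)
    have e6: "12 * kk ^ (i + 1) * 6 ^ i * (d / L + 1 / real q + 1 / L + L / real m)
       = 12 * P * (d / L + 1 / real q + 1 / L + L / real m)"
      unfolding P_def by (simp only: mult.assoc)
    show ?thesis unfolding e5 e6 e4 using e1 e2 e3 by linarith
  qed
  finally show ?thesis unfolding blowup_error_const_def Q_def L_def kk_def i by simp
qed

lemma blowup_boundary_le:
  fixes n q c m t H k :: nat
  assumes q: "1 \<le> q" and c: "1 \<le> c" and H: "1 \<le> H"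
    and n: "n \<le> q * (c * m) + c * m" and t: "t \<le> 2 * c * H"
  shows "real ((n - q * (c * m)) * ((2 * t + 1) choose (k - 1)) + (n * c + q * (t * t)) * ((2 * t + 1) choose (k - 2)))
    \<le> real c * real m * (6 * real c * real H) ^ (k - 1)
      + (2 * real q * real c * real m * real c + real q * (2 * real c * real H) ^ 2) * (6 * real c * real H) ^ (k - 2)"
proof -
  define G where "G = 6 * real c * real H"
  have cH: "1 * 1 \<le> real c * real H" using c H by (intro mult_mono) auto
  have "real t \<le> real (2 * c * H)" using t by (simp only: of_nat_le_iff)
  then have t_real: "real t \<le> 2 * real c * real H" by simp
  with cH have choose_le: "real ((2 * t + 1) choose j) \<le> G ^ j" for j
    unfolding G_def by (intro real_binomial_le_pow) simp
  have G0: "0 \<le> G" unfolding G_def by simp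
  have "n - q * (c * m) \<le> c * m" using n by simp
  then have "real (n - q * (c * m)) \<le> real (c * m)" by (simp only: of_nat_le_iff)
  then have pad: "real (n - q * (c * m)) \<le> real c * real m" by simp
  have "1 * (c * m) \<le> q * (c * m)" using q by (rule mult_le_mono1)
  then have "n \<le> 2 * (q * (c * m))" using n by linarith
  then have "real n \<le> real (2 * (q * (c * m)))" by (simp only: of_nat_le_iff)
  then have n2: "real n \<le> 2 * real q * real c * real m" by simp
  have "real t * real t \<le> (2 * real c * real H) * (2 * real c * real H)"
    using t_real by (intro mult_mono) auto
  then have "real t * real t \<le> (2 * real c * real H) ^ 2" by (simp only: power2_eq_square)
  then have sum_le: "real n * real c + real q * (real t * real t)
      \<le> 2 * real q * real c * real m * real c + real q * (2 * real c * real H) ^ 2"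
    using n2 by (intro add_mono mult_right_mono mult_left_mono) auto
  have "real (n - q * (c * m)) * real ((2 * t + 1) choose (k - 1))
      + (real n * real c + real q * (real t * real t)) * real ((2 * t + 1) choose (k - 2))
    \<le> real c * real m * G ^ (k - 1)
      + (2 * real q * real c * real m * real c + real q * (2 * real c * real H) ^ 2) * G ^ (k - 2)"
  proof (rule add_mono)
    show "real (n - q * (c * m)) * real ((2 * t + 1) choose (k - 1)) \<le> real c * real m * G ^ (k - 1)"
      using pad choose_le G0 by (intro mult_mono) auto
    show "(real n * real c + real q * (real t * real t)) * real ((2 * t + 1) choose (k - 2))
      \<le> (2 * real q * real c * real m * real c + real q * (2 * real c * real H) ^ 2) * G ^ (k - 2)"
      by (rule mult_mono[OF sum_le choose_le]) auto
  qed
  then show ?thesis unfolding G_def by simp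
qed

text \<open>blowup sg c q n: positions p < q c m (0-based, m = length sg) form q copies, placed as an
  increasing direct sum, of the c-inflation of sg, in which each entry is replaced by c consecutive
  increasing values; the remaining positions are fixed points.\<close>
definition blowup_val :: "nat list \<Rightarrow> nat \<Rightarrow> nat \<Rightarrow> nat \<Rightarrow> nat" where
  "blowup_val sg c q p = (if p < q * (c * length sg) then
      (p div (c * length sg)) * (c * length sg) + c * (sg ! ((p mod (c * length sg)) div c) - 1) + p mod c + 1
    else p + 1)"

definition blowup :: "nat list \<Rightarrow> nat \<Rightarrow> nat \<Rightarrow> nat \<Rightarrow> nat list" where
  "blowup sg c q n = map (blowup_val sg c q) [0..<n]"

lemma div_mod_block:
  fixes c m u a d :: nat
  assumes "0 < c" "a < m" "d < c"
  shows "(u * (c*m) + (c*a + d)) div (c*m) = u" "(u * (c*m) + (c*a + d)) mod (c*m) = c*a + d"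
        "(c*a + d) div c = a" "(c*a + d) mod c = d"
proof -
  have lt: "c*a + d < c*m"
  proof -
    have "c*a + d < c*a + c" using assms by simp
    also have "\<dots> = c * (a+1)" by simp
    also have "\<dots> \<le> c*m" using assms by (intro mult_le_mono2) simp
    finally show ?thesis .
  qed
  have nz: "c*m \<noteq> 0"
  proof
    assume "c*m = 0" with lt show False by simp
  qed
  have "(c*a + d + u * (c*m)) div (c*m) = u + (c*a+d) div (c*m)" by (rule div_mult_self1[OF nz])
  then show "(u * (c*m) + (c*a + d)) div (c*m) = u" using lt by (simp add: add.commute)
  show "(u * (c*m) + (c*a + d)) mod (c*m) = c*a + d" using lt by simp
  show "(c*a + d) div c = a" using assms by simp
  show "(c*a + d) mod c = d" using assms by simp
qed

locale blowup_setting =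
  fixes sg :: "nat list" and c q n :: nat
  assumes perm: "is_perm sg" and cpos: "0 < c" and mpos: "0 < length sg"
    and qn: "q * (c * length sg) \<le> n"
begin

abbreviation "m \<equiv> length sg"
abbreviation "M \<equiv> c * length sg"

lemma M_pos: "0 < M" using cpos mpos by simp

lemma sg_nth_range: "i < m \<Longrightarrow> sg ! i \<in> {1..m}"
  using perm unfolding is_perm_def by (metis nth_mem)

lemma sg_nth_inj: "i < m \<Longrightarrow> j < m \<Longrightarrow> sg ! i = sg ! j \<Longrightarrow> i = j"
  using perm unfolding is_perm_def by (simp add: nth_eq_iff_index_eq)

lemma div_c_less_m: "w < M \<Longrightarrow> w div c < m"
  using cpos by (simp add: div_less_iff_less_mult mult.commute)

lemma mod_M_mod_c: "p mod M mod c = p mod c"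
  by (simp add: mod_mod_cancel)

lemma blowup_val_copy:
  assumes "p < q * M"
  shows "blowup_val sg c q p - 1 = p div M * M + (c * (sg ! (p mod M div c) - 1) + p mod c)"
    "blowup_val sg c q p \<ge> 1"
  using assms unfolding blowup_val_def by auto

lemma blowup_val_copy_le:
  assumes "p < q * M"
  shows "blowup_val sg c q p \<le> q * M"
proof -
  let ?u = "p div M" and ?e = "p mod M div c"
  have "p mod M < M" using M_pos by simp
  then have e: "?e < m" by (rule div_c_less_m)
  then have a: "sg ! ?e - 1 < m" using sg_nth_range[OF e] by auto
  have u: "?u < q" using assms M_pos by (simp add: div_less_iff_less_mult)
  have "c * (sg ! ?e - 1) + p mod c < M"
    using a cpos div_mod_block(1)[of c "sg ! ?e - 1" m "p mod c" 0] by (metis M_pos mod_less_divisor mod_less mult.commute div_mod_block(2) mult_0)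
  then have "blowup_val sg c q p \<le> ?u * M + M" using assms unfolding blowup_val_def by simp
  also have "\<dots> = (?u + 1) * M" by simp
  also have "\<dots> \<le> q * M" using u by (intro mult_le_mono1) simp
  finally show ?thesis .
qed

lemma blowup_val_copy_decode:
  assumes "p < q * M"
  shows "(blowup_val sg c q p - 1) div M = p div M"
    "(blowup_val sg c q p - 1) mod M div c = sg ! (p mod M div c) - 1"
    "(blowup_val sg c q p - 1) mod M mod c = p mod c"
proof -
  let ?e = "p mod M div c"
  have "p mod M < M" using M_pos by simp
  then have e: "?e < m" by (rule div_c_less_m)
  then have a: "sg ! ?e - 1 < m" using sg_nth_range[OF e] by auto
  have d: "p mod c < c" using cpos by simp
  note D = div_mod_block(1,2)[OF cpos a d, of "p div M"] div_mod_block(3,4)[OF cpos a d]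
  show "(blowup_val sg c q p - 1) div M = p div M" "(blowup_val sg c q p - 1) mod M div c = sg ! ?e - 1"
    "(blowup_val sg c q p - 1) mod M mod c = p mod c"
    using D blowup_val_copy(1)[OF assms] by simp_all
qed

lemma copy_block_decomp: "p = p div M * M + (c * (p mod M div c) + p mod c)"
proof -
  have "p mod M = c * (p mod M div c) + p mod M mod c" by simp
  then show ?thesis using mod_M_mod_c by (metis div_mult_mod_eq)
qed

lemma blowup_val_inj:
  assumes "p < n" "p' < n" "blowup_val sg c q p = blowup_val sg c q p'"
  shows "p = p'"
proof (cases "p < q * M")
  case True
  note pT = True
  show ?thesis
  proof (cases "p' < q * M")
    case True
    have 1: "p div M = p' div M" using blowup_val_copy_decode(1)[OF pT] blowup_val_copy_decode(1)[OF True] assms(3) by simp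
    have 2: "sg ! (p mod M div c) - 1 = sg ! (p' mod M div c) - 1"
      using blowup_val_copy_decode(2)[OF pT] blowup_val_copy_decode(2)[OF True] assms(3) by simp
    have 3: "p mod c = p' mod c" using blowup_val_copy_decode(3)[OF pT] blowup_val_copy_decode(3)[OF True] assms(3) by simp
    have e: "p mod M div c < m" "p' mod M div c < m" using M_pos by (simp_all add: div_c_less_m)
    have "sg ! (p mod M div c) = sg ! (p' mod M div c)"
      using 2 sg_nth_range[OF e(1)] sg_nth_range[OF e(2)] by auto
    then have "p mod M div c = p' mod M div c" using sg_nth_inj e by blast
    then show ?thesis using 1 3 copy_block_decomp[of p] copy_block_decomp[of p'] by metis
  next
    case False
    then show ?thesis using blowup_val_copy_le[OF pT] assms(3) unfolding blowup_val_def[of _ _ _ p'] by simp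
  qed
next
  case False
  note pF = False
  show ?thesis
  proof (cases "p' < q * M")
    case True
    then show ?thesis using blowup_val_copy_le[OF True] assms(3) pF unfolding blowup_val_def[of _ _ _ p] by simp
  next
    case False
    then show ?thesis using pF assms(3) unfolding blowup_val_def by simp
  qed
qed

lemma blowup_val_range: "p < n \<Longrightarrow> blowup_val sg c q p \<in> {1..n}"
proof (cases "p < q * M")
  case True
  then show ?thesis using blowup_val_copy(2)[OF True] blowup_val_copy_le[OF True] qn by auto
next
  case False
  then show "p < n \<Longrightarrow> ?thesis" unfolding blowup_val_def by simp
qed

lemma blowup_length: "length (blowup sg c q n) = n" unfolding blowup_def by simp

lemma blowup_nth: "p < n \<Longrightarrow> blowup sg c q n ! p = blowup_val sg c q p" unfolding blowup_def by simp

lemma is_perm_blowup: "is_perm (blowup sg c q n)"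
proof -
  have inj: "inj_on (blowup_val sg c q) {0..<n}" by (rule inj_onI) (use blowup_val_inj in auto)
  have d: "distinct (blowup sg c q n)" unfolding blowup_def using inj by (simp add: distinct_map)
  have s: "set (blowup sg c q n) = blowup_val sg c q ` {0..<n}" unfolding blowup_def by simp
  have sub: "blowup_val sg c q ` {0..<n} \<subseteq> {1..n}" using blowup_val_range by auto
  have "card (blowup_val sg c q ` {0..<n}) = n" using card_image[OF inj] by simp
  then have "blowup_val sg c q ` {0..<n} = {1..n}" using sub by (intro card_subset_eq) auto
  then show ?thesis unfolding is_perm_def using d s blowup_length by simp
qed

text \<open>Position x (1-based) of the blow-up lies in copy copy_idx x (0-based), in the block of that
  copy replacing entry block_idx x (1-based) of sg. A transversal of J in copy u meets each block
  indexed by J exactly once; it has the same pattern as J.\<close>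
definition copy_idx :: "nat \<Rightarrow> nat" where "copy_idx x = (x - 1) div M"
definition block_idx :: "nat \<Rightarrow> nat" where "block_idx x = (x - 1) mod M div c + 1"
definition block :: "nat \<Rightarrow> nat \<Rightarrow> nat set" where
  "block u e = {u * M + (e - 1) * c + 1 .. u * M + (e - 1) * c + c}"
definition transversals :: "nat \<Rightarrow> nat set \<Rightarrow> nat set set" where
  "transversals u J = {I. I \<subseteq> \<Union>(block u ` J) \<and> (\<forall>e\<in>J. card (I \<inter> block u e) = 1)}"

lemma block_memD:
  assumes "e \<in> {1..m}" "x \<in> block u e"
  shows "copy_idx x = u" "block_idx x = e" "1 \<le> x" "x - 1 = u * M + (c * (e - 1) + (x - 1) mod c)"
proof -
  obtain d where d: "d < c" "x - 1 = u * M + (c * (e - 1) + d)"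
  proof -
    let ?b = "u * M + (e - 1) * c"
    have x: "?b + 1 \<le> x" "x \<le> ?b + c" using assms(2) unfolding block_def by auto
    have "x - 1 - ?b < c" "x - 1 = u * M + (c * (e - 1) + (x - 1 - ?b))" using x by (auto simp: algebra_simps)
    then show ?thesis using that by blast
  qed
  have a: "e - 1 < m" using assms(1) by auto
  note D = div_mod_block(1,2)[OF cpos a d(1), of u] div_mod_block(3,4)[OF cpos a d(1)]
  show "copy_idx x = u" unfolding copy_idx_def using d D by simp
  show "block_idx x = e" unfolding block_idx_def using d D assms(1) by simp
  show "1 \<le> x" using assms(2) unfolding block_def by simp
  have "(x - 1) mod c = d"
  proof -
    have "(x-1) mod c = (x - 1) mod M mod c" using mod_M_mod_c by simp
    then show ?thesis using d D by simp
  qed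
  then show "x - 1 = u * M + (c * (e - 1) + (x - 1) mod c)" using d by simp
qed

lemma mem_block:
  assumes "1 \<le> x"
  shows "x \<in> block (copy_idx x) (block_idx x)" "block_idx x \<in> {1..m}"
proof -
  have p: "x - 1 = copy_idx x * M + (c * (block_idx x - 1) + (x - 1) mod c)"
    using copy_block_decomp[of "x-1"] unfolding copy_idx_def block_idx_def by simp
  have r: "(x-1) mod c < c" using cpos by simp
  define b where "b = copy_idx x * M + (block_idx x - 1) * c"
  have cm: "c * (block_idx x - 1) = (block_idx x - 1) * c" by (rule mult.commute)
  have xb: "x = b + (x - 1) mod c + 1" using p assms cm unfolding b_def by linarith
  show "x \<in> block (copy_idx x) (block_idx x)" unfolding block_def b_def[symmetric] atLeastAtMost_iff using xb r by linarith
  have "(x - 1) mod M < M" using M_pos by simp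
  then show "block_idx x \<in> {1..m}" unfolding block_idx_def using div_c_less_m by (simp add: Suc_le_eq)
qed

lemma card_block: "card (block u e) = c" unfolding block_def by simp

lemma finite_block: "finite (block u e)" unfolding block_def by simp

lemma block_disjoint: "e \<in> {1..m} \<Longrightarrow> e' \<in> {1..m} \<Longrightarrow> x \<in> block u e \<Longrightarrow> x \<in> block u' e' \<Longrightarrow> e = e' \<and> u = u'"
  using block_memD by metis

lemma transversals_memD:
  assumes "J \<subseteq> {1..m}" "I \<in> transversals u J" "x \<in> I"
  shows "copy_idx x = u" "block_idx x \<in> J" "1 \<le> x" "x \<in> block u (block_idx x)"
proof -
  obtain e where e: "e \<in> J" "x \<in> block u e" using assms unfolding transversals_def by blast
  have e1: "e \<in> {1..m}" using e assms(1) by auto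
  show "copy_idx x = u" "block_idx x \<in> J" "1 \<le> x" "x \<in> block u (block_idx x)" using block_memD[OF e1 e(2)] e by auto
qed

lemma block_idx_image:
  assumes "J \<subseteq> {1..m}" "I \<in> transversals u J"
  shows "block_idx ` I = J"
proof
  show "block_idx ` I \<subseteq> J" using transversals_memD[OF assms] by auto
  show "J \<subseteq> block_idx ` I"
  proof
    fix e assume e: "e \<in> J"
    then have "card (I \<inter> block u e) = 1" using assms unfolding transversals_def by auto
    then obtain z where "I \<inter> block u e = {z}" using card_1_singleton_iff by (metis One_nat_def)
    then have "z \<in> I" "z \<in> block u e" by blast+
    then obtain x where "x \<in> I" "x \<in> block u e" by blast
    then have "block_idx x = e" using block_memD e assms(1) by auto
    then show "e \<in> block_idx ` I" using \<open>x \<in> I\<close> by auto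
  qed
qed

lemma transversal_block_idx_inj:
  assumes "J \<subseteq> {1..m}" "I \<in> transversals u J" "x \<in> I" "y \<in> I" "block_idx x = block_idx y"
  shows "x = y"
proof -
  have "block_idx x \<in> J" using transversals_memD(2)[OF assms(1,2,3)] .
  have "x \<in> block u (block_idx x)" using transversals_memD(4)[OF assms(1,2,3)] .
  have "y \<in> block u (block_idx x)" using transversals_memD(4)[OF assms(1,2,4)] assms(5) by simp
  have "\<forall>e\<in>J. card (I \<inter> block u e) = 1" using assms(2) unfolding transversals_def by simp
  then have "card (I \<inter> block u (block_idx x)) = 1" using \<open>block_idx x \<in> J\<close> by blast
  then obtain z where "I \<inter> block u (block_idx x) = {z}" using card_1_singleton_iff by (metis One_nat_def)
  moreover have "x \<in> I \<inter> block u (block_idx x)" "y \<in> I \<inter> block u (block_idx x)"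
    using assms(3,4) \<open>x \<in> block u (block_idx x)\<close> \<open>y \<in> block u (block_idx x)\<close> by auto
  ultimately have "x \<in> {z}" "y \<in> {z}" by auto
  then show ?thesis by simp
qed

lemma finite_transversal:
  assumes "finite J" "I \<in> transversals u J"
  shows "finite I"
proof -
  have "finite (\<Union>(block u ` J))" using assms(1) finite_block by simp
  moreover have "I \<subseteq> \<Union>(block u ` J)" using assms(2) unfolding transversals_def by simp
  ultimately show ?thesis using finite_subset by blast
qed

lemma card_transversal:
  assumes "J \<subseteq> {1..m}" "I \<in> transversals u J"
  shows "card I = card J"
proof -
  have "inj_on block_idx I" using transversal_block_idx_inj[OF assms] by (auto intro: inj_onI)
  then have "card (block_idx ` I) = card I" by (rule card_image)
  then show ?thesis using block_idx_image[OF assms] by simp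
qed

lemma transversal_block_idx_mono:
  assumes "J \<subseteq> {1..m}" "I \<in> transversals u J" "x \<in> I" "y \<in> I" "x < y"
  shows "block_idx x < block_idx y"
proof -
  have "copy_idx x = u" "copy_idx y = u" "1 \<le> x" "1 \<le> y" using transversals_memD[OF assms(1,2)] assms(3,4) by auto
  have px: "x - 1 = u * M + (x - 1) mod M" using div_mult_mod_eq[of "x-1" M] \<open>copy_idx x = u\<close> unfolding copy_idx_def by simp
  have py: "y - 1 = u * M + (y - 1) mod M" using div_mult_mod_eq[of "y-1" M] \<open>copy_idx y = u\<close> unfolding copy_idx_def by simp
  have "(x - 1) mod M < (y - 1) mod M" using px py assms(5) \<open>1 \<le> x\<close> by linarith
  then have "block_idx x \<le> block_idx y" unfolding block_idx_def by (simp add: div_le_mono)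
  moreover have "block_idx x \<noteq> block_idx y" using transversal_block_idx_inj[OF assms(1,2,3,4)] assms(5) by auto
  ultimately show ?thesis by simp
qed

lemma inj_on_image_PiE_block:
  assumes "J \<subseteq> {1..m}"
  shows "inj_on (\<lambda>d. d ` J) (PiE J (block u))"
proof (rule inj_onI)
  fix d d' assume d: "d \<in> PiE J (block u)" and d': "d' \<in> PiE J (block u)" and eq: "d ` J = d' ` J"
  show "d = d'"
  proof (rule PiE_ext[OF d d'])
    fix e assume e: "e \<in> J"
    then obtain e' where e': "e' \<in> J" "d e = d' e'" using eq by (metis imageE imageI)
    have "d e \<in> block u e" "d' e' \<in> block u e'" using PiE_mem d d' e e'(1) by auto
    moreover have "e \<in> {1..m}" "e' \<in> {1..m}" using assms e e'(1) by auto
    ultimately have "e = e'" using block_disjoint[of e e' "d e" u u] e'(2) by simp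
    then show "d e = d' e" using e' by simp
  qed
qed

lemma transversals_eq_image_PiE:
  assumes "J \<subseteq> {1..m}"
  shows "transversals u J = (\<lambda>d. d ` J) ` PiE J (block u)"
proof
  show "(\<lambda>d. d ` J) ` PiE J (block u) \<subseteq> transversals u J"
  proof
    fix I assume "I \<in> (\<lambda>d. d ` J) ` PiE J (block u)"
    then obtain d where d: "d \<in> PiE J (block u)" "I = d ` J" by auto
    have "I \<inter> block u e = {d e}" if e: "e \<in> J" for e
    proof
      show "{d e} \<subseteq> I \<inter> block u e" using d e by auto
      show "I \<inter> block u e \<subseteq> {d e}"
      proof
        fix x assume "x \<in> I \<inter> block u e"
        then obtain e' where "e' \<in> J" "x = d e'" "x \<in> block u e" using d by auto
        moreover have "d e' \<in> block u e'" using d \<open>e' \<in> J\<close> by auto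
        moreover have "e \<in> {1..m}" "e' \<in> {1..m}" using assms e \<open>e' \<in> J\<close> by auto
        ultimately show "x \<in> {d e}" using block_disjoint[of e e' x u u] by simp
      qed
    qed
    then show "I \<in> transversals u J" unfolding transversals_def using d by auto
  qed
  show "transversals u J \<subseteq> (\<lambda>d. d ` J) ` PiE J (block u)"
  proof
    fix I assume I: "I \<in> transversals u J"
    have "\<exists>x. I \<inter> block u e = {x}" if "e \<in> J" for e
      using I that unfolding transversals_def by (auto simp: card_1_singleton_iff)
    then obtain d where d: "\<And>e. e \<in> J \<Longrightarrow> I \<inter> block u e = {d e}" by metis
    have "restrict d J \<in> PiE J (block u)" using d by auto
    moreover have "restrict d J ` J = I"
    proof
      show "restrict d J ` J \<subseteq> I" using d by auto
      show "I \<subseteq> restrict d J ` J"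
      proof
        fix x assume x: "x \<in> I"
        then obtain e where "e \<in> J" "x \<in> block u e" using I unfolding transversals_def by auto
        then show "x \<in> restrict d J ` J" using d x by force
      qed
    qed
    ultimately show "I \<in> (\<lambda>d. d ` J) ` PiE J (block u)" by blast
  qed
qed

lemma card_transversals:
  assumes "J \<subseteq> {1..m}"
  shows "card (transversals u J) = c ^ card J"
proof -
  have "finite J" using assms finite_subset by blast
  then have "card (PiE J (block u)) = c ^ card J" by (simp add: card_PiE card_block)
  then show ?thesis
    using card_image[OF inj_on_image_PiE_block[OF assms]] transversals_eq_image_PiE[OF assms] by simp
qed

lemma block_bounds:
  assumes "e \<in> {1..m}" "x \<in> block u e"
  shows "u * M + (e - 1) * c + 1 \<le> x" "x \<le> u * M + e * c"
proof -
  show "u * M + (e - 1) * c + 1 \<le> x" using assms(2) unfolding block_def by simp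
  have "(e - 1) * c + c = e * c" using assms(1) by (cases e) auto
  then show "x \<le> u * M + e * c" using assms(2) unfolding block_def by simp
qed

lemma transversal_bounds:
  assumes "J \<subseteq> {1..m}" "I \<in> transversals u J" "x \<in> I"
  shows "u * M + (block_idx x - 1) * c + 1 \<le> x" "x \<le> u * M + block_idx x * c"
proof -
  have "block_idx x \<in> J" "x \<in> block u (block_idx x)" using transversals_memD[OF assms] by auto
  then have "block_idx x \<in> {1..m}" using assms(1) by auto
  then show "u * M + (block_idx x - 1) * c + 1 \<le> x" "x \<le> u * M + block_idx x * c"
    using block_bounds \<open>x \<in> block u (block_idx x)\<close> by auto
qed

lemma width_transversal_le:
  assumes "J \<subseteq> {1..m}" "I \<in> transversals u J" "J \<noteq> {}"
  shows "width I \<le> c * width J"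
proof -
  have fJ: "finite J" using assms(1) finite_subset by blast
  have fI: "finite I" using finite_transversal[OF fJ assms(2)] .
  have img: "block_idx ` I = J" using block_idx_image[OF assms(1,2)] .
  then have neI: "I \<noteq> {}" using assms(3) by auto
  have "Max I \<in> I" "Min I \<in> I" using fI neI by auto
  have "block_idx (Max I) \<le> Max J" using img fJ \<open>Max I \<in> I\<close> by auto
  have "Min J \<le> block_idx (Min I)" using img fJ \<open>Min I \<in> I\<close> by auto
  have "Min J \<ge> 1" using assms fJ Min_in by fastforce
  have "Min J \<le> Max J" using fJ assms(3) by simp
  have a: "Max I \<le> u * M + Max J * c"
    using transversal_bounds(2)[OF assms(1,2) \<open>Max I \<in> I\<close>] \<open>block_idx (Max I) \<le> Max J\<close>
    by (meson add_le_mono le_refl mult_le_mono1 order_trans)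
  have b1: "(Min J - 1) * c \<le> (block_idx (Min I) - 1) * c" using \<open>Min J \<le> block_idx (Min I)\<close> by (intro mult_le_mono1) simp
  have b: "u * M + (Min J - 1) * c + 1 \<le> Min I"
    using transversal_bounds(1)[OF assms(1,2) \<open>Min I \<in> I\<close>] b1 by linarith
  have w: "width J = Max J - Min J + 1" unfolding width_def by simp
  have "c * width J = Max J * c - (Min J - 1) * c"
    using w \<open>Min J \<ge> 1\<close> \<open>Min J \<le> Max J\<close> by (simp add: diff_mult_distrib algebra_simps)
  moreover have "(Min J - 1) * c \<le> Max J * c" using \<open>Min J \<le> Max J\<close> by (intro mult_le_mono1) simp
  moreover have "Min I \<le> Max I" using fI neI by simp
  ultimately show ?thesis unfolding width_def using a b by linarith
qed

lemma width_transversal_ge: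
  assumes "J \<subseteq> {1..m}" "I \<in> transversals u J" "J \<noteq> {}"
  shows "(width J - 2) * c \<le> width I"
proof -
  have fJ: "finite J" using assms(1) finite_subset by blast
  have fI: "finite I" using finite_transversal[OF fJ assms(2)] .
  have img: "block_idx ` I = J" using block_idx_image[OF assms(1,2)] .
  obtain y where y: "y \<in> I" "block_idx y = Max J" using img fJ assms(3) Max_in by (metis imageE)
  obtain z where z: "z \<in> I" "block_idx z = Min J" using img fJ assms(3) Min_in by (metis imageE)
  have "Max J \<ge> 1" using assms fJ Max_in by fastforce
  have y1: "u * M + (Max J - 1) * c + 1 \<le> y" using transversal_bounds(1)[OF assms(1,2) y(1)] y(2) by simp
  have z1: "z \<le> u * M + Min J * c" using transversal_bounds(2)[OF assms(1,2) z(1)] z(2) by simp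
  have "y \<le> Max I" "Min I \<le> z" using fI y z by auto
  have "(width J - 2) * c = (Max J - 1) * c - Min J * c"
    unfolding width_def by (simp add: diff_mult_distrib)
  then show ?thesis unfolding width_def using y1 z1 \<open>y \<le> Max I\<close> \<open>Min I \<le> z\<close> by linarith
qed

lemma transversal_in_copy:
  assumes "J \<subseteq> {1..m}" "I \<in> transversals u J" "u < q" "x \<in> I"
  shows "x - 1 < q * M" "1 \<le> x"
    "blowup_val sg c q (x - 1) = u * M + c * (sg ! (block_idx x - 1) - 1) + (x - 1) mod c + 1"
proof -
  have b: "x \<le> u * M + block_idx x * c" using transversal_bounds(2)[OF assms(1,2,4)] .
  have "block_idx x \<in> J" using transversals_memD[OF assms(1,2,4)] by simp
  then have "block_idx x \<le> m" using assms(1) by auto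
  then have "block_idx x * c \<le> M" by (simp add: mult.commute)
  then have "x \<le> u * M + M" using b by linarith
  also have "\<dots> = (u + 1) * M" by simp
  also have "\<dots> \<le> q * M" using assms(3) by (intro mult_le_mono1) simp
  finally have xq: "x \<le> q * M" .
  show "1 \<le> x" using transversals_memD[OF assms(1,2,4)] by simp
  then show x1: "x - 1 < q * M" using xq by simp
  have "(x - 1) div M = u" using transversals_memD[OF assms(1,2,4)] unfolding copy_idx_def by simp
  moreover have "(x - 1) mod M div c = block_idx x - 1" unfolding block_idx_def by simp
  ultimately show "blowup_val sg c q (x - 1) = u * M + c * (sg ! (block_idx x - 1) - 1) + (x - 1) mod c + 1"
    using x1 unfolding blowup_val_def by simp
qed

lemma transversal_subset:
  assumes "J \<subseteq> {1..m}" "I \<in> transversals u J" "u < q"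
  shows "I \<subseteq> {1..n}"
proof
  fix x assume "x \<in> I"
  then have "x - 1 < q * M" "1 \<le> x" using transversal_in_copy[OF assms] by auto
  then show "x \<in> {1..n}" using qn by auto
qed

lemma transversal_order:
  assumes "J \<subseteq> {1..m}" "I \<in> transversals u J" "u < q" "x \<in> I" "y \<in> I" "block_idx x \<noteq> block_idx y"
  shows "blowup_val sg c q (x - 1) < blowup_val sg c q (y - 1) \<longleftrightarrow> sg ! (block_idx x - 1) < sg ! (block_idx y - 1)"
proof -
  have "block_idx x \<in> J" "block_idx y \<in> J" using transversals_memD(2)[OF assms(1,2,4)] transversals_memD(2)[OF assms(1,2,5)] .
  then have bx: "block_idx x \<in> {1..m}" "block_idx y \<in> {1..m}" using assms(1) by blast+
  then have r: "sg ! (block_idx x - 1) \<in> {1..m}" "sg ! (block_idx y - 1) \<in> {1..m}" using sg_nth_range by auto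
  have ne: "sg ! (block_idx x - 1) \<noteq> sg ! (block_idx y - 1)"
  proof
    assume "sg ! (block_idx x - 1) = sg ! (block_idx y - 1)"
    then have "block_idx x - 1 = block_idx y - 1" using sg_nth_inj bx by auto
    then show False using assms(6) bx by auto
  qed
  define a where "a = sg ! (block_idx x - 1) - 1"
  define b where "b = sg ! (block_idx y - 1) - 1"
  have ab: "a \<noteq> b" "a < b \<longleftrightarrow> sg ! (block_idx x - 1) < sg ! (block_idx y - 1)" using ne r[unfolded atLeastAtMost_iff] unfolding a_def b_def by linarith+
  have dx: "(x - 1) mod c < c" "(y - 1) mod c < c" using cpos by auto
  have vx: "blowup_val sg c q (x - 1) = u * M + c * a + (x - 1) mod c + 1"
    using transversal_in_copy(3)[OF assms(1-4)] unfolding a_def .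
  have vy: "blowup_val sg c q (y - 1) = u * M + c * b + (y - 1) mod c + 1"
    using transversal_in_copy(3)[OF assms(1-3,5)] unfolding b_def .
  show ?thesis
  proof (cases "a < b")
    case True
    then have "c * a + c \<le> c * b" by (metis Suc_leI mult_Suc_right mult_le_mono2 add.commute)
    then show ?thesis using vx vy dx ab True by linarith
  next
    case False
    then have "b < a" using ab by simp
    then have "c * b + c \<le> c * a" by (metis Suc_leI mult_Suc_right mult_le_mono2 add.commute)
    then show ?thesis using vx vy dx ab False by linarith
  qed
qed

lemma occurrence_transversal_iff:
  assumes "J \<subseteq> {1..m}" "I \<in> transversals u J" "u < q"
  shows "occurrence pat (blowup sg c q n) I \<longleftrightarrow> occurrence pat sg J"
proof -
  have fJ: "finite J" using assms(1) finite_subset by blast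
  have fI: "finite I" using finite_transversal[OF fJ assms(2)] .
  have cI: "card I = card J" using card_transversal[OF assms(1,2)] .
  have img: "block_idx ` I = J" using block_idx_image[OF assms(1,2)] .
  let ?ix = "sorted_list_of_set I"
  have ixJ: "sorted_list_of_set J = map block_idx ?ix"
    using sorted_list_of_set_image_strict_mono[OF fI, of block_idx] transversal_block_idx_mono[OF assms(1,2)] img by simp
  have len: "length ?ix = card I" by simp
  have Isub: "I \<subseteq> {1..n}" by (rule transversal_subset[OF assms])
  have key: "(blowup sg c q n ! (?ix ! a - 1) < blowup sg c q n ! (?ix ! b - 1)) \<longleftrightarrow>
             (sg ! (sorted_list_of_set J ! a - 1) < sg ! (sorted_list_of_set J ! b - 1))"
    if ab: "a < card I" "b < card I" for a b
  proof -
    have xa: "?ix ! a \<in> I" "?ix ! b \<in> I" using ab len nth_mem set_sorted_list_of_set fI by metis+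
    have J': "sorted_list_of_set J ! a = block_idx (?ix ! a)" "sorted_list_of_set J ! b = block_idx (?ix ! b)"
      using ixJ ab len by simp_all
    have "?ix ! a \<in> {1..n}" "?ix ! b \<in> {1..n}" using xa Isub by blast+
    then have n1: "?ix ! a - 1 < n" "?ix ! b - 1 < n" by auto
    show ?thesis
    proof (cases "a = b")
      case True then show ?thesis by simp
    next
      case False
      then have "?ix ! a \<noteq> ?ix ! b" using ab len distinct_sorted_list_of_set nth_eq_iff_index_eq by metis
      then have "block_idx (?ix ! a) \<noteq> block_idx (?ix ! b)" using transversal_block_idx_inj[OF assms(1,2) xa] by blast
      then show ?thesis using transversal_order[OF assms xa] J' n1 blowup_nth by simp
    qed
  qed
  show ?thesis unfolding occurrence_def Let_def
    using Isub assms(1) cI key blowup_length by auto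
qed

lemma transversals_disjoint:
  assumes "J \<subseteq> {1..m}" "J' \<subseteq> {1..m}" "J \<noteq> {}" "I \<in> transversals u J" "I \<in> transversals u' J'"
  shows "u = u' \<and> J = J'"
proof -
  have "J = J'" using block_idx_image[OF assms(1,4)] block_idx_image[OF assms(2,5)] by simp
  moreover obtain x where x: "x \<in> I" using block_idx_image[OF assms(1,4)] assms(3) by auto
  moreover have "copy_idx x = u" using transversals_memD(1)[OF assms(1,4) x] .
  moreover have "copy_idx x = u'" using transversals_memD(1)[OF assms(2,5) x] .
  ultimately show ?thesis by simp
qed

lemma windowed_count_blowup_ge:
  fixes P :: "nat set \<Rightarrow> bool" and Ps :: "nat set \<Rightarrow> bool"
  assumes k: "1 \<le> k" and st: "s * c \<le> t"
    and tr: "\<And>u J I. u < q \<Longrightarrow> J \<subseteq> {1..m} \<Longrightarrow> I \<in> transversals u J \<Longrightarrow> P I = Ps J"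
  shows "q * c ^ k * windowed_count m k s Ps \<le> windowed_count n k t P"
proof -
  let ?SJ = "{J. J \<subseteq> {1..m} \<and> card J = k \<and> width J \<le> s \<and> Ps J}"
  let ?X = "{0..<q} \<times> ?SJ"
  let ?A = "\<lambda>p. transversals (fst p) (snd p)"
  have fX: "finite ?X" using finite_subsets_atLeastAtMost by auto
  have fA: "\<forall>p\<in>?X. finite (?A p)"
  proof
    fix p assume p: "p \<in> ?X"
    have "I \<subseteq> {1..n}" if "I \<in> ?A p" for I by (rule transversal_subset) (use p that in auto)
    then have "?A p \<subseteq> Pow {1..n}" by blast
    then show "finite (?A p)" by (rule finite_subset) simp
  qed
  have disj: "\<forall>p\<in>?X. \<forall>p'\<in>?X. p \<noteq> p' \<longrightarrow> ?A p \<inter> ?A p' = {}"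
  proof (intro ballI impI)
    fix p p' assume p: "p \<in> ?X" and p': "p' \<in> ?X" and ne: "p \<noteq> p'"
    show "?A p \<inter> ?A p' = {}"
    proof (rule ccontr)
      assume "?A p \<inter> ?A p' \<noteq> {}"
      then obtain I where "I \<in> ?A p" "I \<in> ?A p'" by auto
      moreover have "snd p \<noteq> {}" using p k by auto
      moreover have "snd p \<subseteq> {1..m}" "snd p' \<subseteq> {1..m}" using p p' by auto
      ultimately have "fst p = fst p' \<and> snd p = snd p'" using transversals_disjoint[of "snd p" "snd p'" I "fst p" "fst p'"] by blast
      then show False using ne by (simp add: prod_eq_iff)
    qed
  qed
  have sub: "(\<Union>p\<in>?X. ?A p) \<subseteq> {I. I \<subseteq> {1..n} \<and> card I = k \<and> width I \<le> t \<and> P I}"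
  proof
    fix I assume "I \<in> (\<Union>p\<in>?X. ?A p)"
    then obtain u J where uJ: "u < q" "J \<subseteq> {1..m}" "card J = k" "width J \<le> s" "Ps J" "I \<in> transversals u J" by auto
    have "J \<noteq> {}" using uJ k by auto
    have "I \<subseteq> {1..n}" by (rule transversal_subset[OF uJ(2,6,1)])
    moreover have "card I = k" using card_transversal[OF uJ(2,6)] uJ(3) by simp
    moreover have "width I \<le> c * width J" using width_transversal_le[OF uJ(2,6) \<open>J \<noteq> {}\<close>] .
    then have "width I \<le> t" using uJ(4) st by (metis le_trans mult.commute mult_le_mono2)
    moreover have "P I" using tr[OF uJ(1,2,6)] uJ(5) by simp
    ultimately show "I \<in> {I. I \<subseteq> {1..n} \<and> card I = k \<and> width I \<le> t \<and> P I}" by simp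
  qed
  have "card (\<Union>p\<in>?X. ?A p) = (\<Sum>p\<in>?X. card (?A p))" by (rule card_UN_disjoint[OF fX fA disj])
  also have "\<dots> = (\<Sum>p\<in>?X. c ^ k)"
  proof (rule sum.cong[OF refl])
    fix p assume "p \<in> ?X"
    then show "card (?A p) = c ^ k" using card_transversals[of "snd p" "fst p"] by auto
  qed
  also have "\<dots> = q * card ?SJ * c ^ k" by (simp add: card_cartesian_product)
  finally have "card (\<Union>p\<in>?X. ?A p) = q * c ^ k * windowed_count m k s Ps" unfolding windowed_count_def by simp
  moreover have "card (\<Union>p\<in>?X. ?A p) \<le> windowed_count n k t P" unfolding windowed_count_def by (rule card_mono[OF finite_subsets_atLeastAtMost sub])
  ultimately show ?thesis by simp
qed

lemma copy_idx_mono: "x \<le> y \<Longrightarrow> copy_idx x \<le> copy_idx y"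
  unfolding copy_idx_def by (simp add: div_le_mono)

definition bad_pairs :: "nat \<Rightarrow> (nat \<times> nat) set" where
  "bad_pairs t = {(x, y). x \<in> {1..q*M} \<and> y \<in> {1..q*M} \<and> x < y \<and> y < x + t \<and>
     (copy_idx x \<noteq> copy_idx y \<or> block_idx x = block_idx y)}"

lemma finite_bad_pairs: "finite (bad_pairs t)"
  by (rule finite_subset[of _ "{1..q*M} \<times> {1..q*M}"]) (auto simp: bad_pairs_def)

text \<open>A close pair inside one copy and one block lies within distance c of its left end;
  a close pair in different copies straddles a copy boundary v M.\<close>
lemma card_bad_pairs: "card (bad_pairs t) \<le> n * c + q * (t * t)"
proof -
  let ?B1 = "Sigma {1..n} (\<lambda>x. {x<..<x+c})"
  let ?B2 = "\<Union>v\<in>{1..<q}. ({v * M + 1 - t .. v * M} \<times> {v * M + 1 .. v * M + t})"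
  have sub: "bad_pairs t \<subseteq> ?B1 \<union> ?B2"
  proof
    fix p assume "p \<in> bad_pairs t"
    then obtain x y where p: "p = (x, y)" "x \<in> {1..q*M}" "y \<in> {1..q*M}" "x < y" "y < x + t"
      "copy_idx x \<noteq> copy_idx y \<or> block_idx x = block_idx y" unfolding bad_pairs_def by auto
    show "p \<in> ?B1 \<union> ?B2"
    proof (cases "copy_idx x = copy_idx y")
      case True
      then have "x \<in> block (copy_idx x) (block_idx x)" "y \<in> block (copy_idx x) (block_idx x)"
        using mem_block(1)[of x] mem_block(1)[of y] p by auto
      then have "y < x + c" unfolding block_def by auto
      then show ?thesis using p qn by auto
    next
      case False
      then have lt: "copy_idx x < copy_idx y" using copy_idx_mono[of x y] p(4) by simp
      define v where "v = copy_idx y"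
      have "1 \<le> v" using lt v_def by simp
      have "y - 1 < q * M" using p by auto
      then have "v < q" unfolding v_def copy_idx_def using M_pos by (simp add: div_less_iff_less_mult)
      have "v * M \<le> y - 1" unfolding v_def copy_idx_def by (metis div_mult_mod_eq le_add1)
      have "(x - 1) div M < v" using lt unfolding v_def copy_idx_def by simp
      then have "x - 1 < v * M" using M_pos by (simp add: div_less_iff_less_mult)
      have "x \<in> {v * M + 1 - t .. v * M}" "y \<in> {v * M + 1 .. v * M + t}"
        using \<open>v * M \<le> y - 1\<close> \<open>x - 1 < v * M\<close> p by auto
      then show ?thesis using p \<open>1 \<le> v\<close> \<open>v < q\<close> by auto
    qed
  qed
  have "card ?B1 \<le> n * c"
  proof -
    have "card ?B1 = (\<Sum>x\<in>{1..n}. card {x<..<x+c})" by simp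
    also have "\<dots> \<le> (\<Sum>x\<in>{1..n}. c)" by (intro sum_mono) simp
    finally show ?thesis by simp
  qed
  moreover have "card ?B2 \<le> q * (t * t)"
  proof -
    have "card ?B2 \<le> (\<Sum>v\<in>{1..<q}. card ({v * M + 1 - t .. v * M} \<times> {v * M + 1 .. v * M + t}))"
      by (rule card_UN_le) simp
    also have "\<dots> \<le> (\<Sum>v\<in>{1..<q}. t * t)"
    proof (rule sum_mono)
      fix v
      have "card {v * M + 1 - t .. v * M} \<le> t" by simp
      then show "card ({v * M + 1 - t .. v * M} \<times> {v * M + 1 .. v * M + t}) \<le> t * t"
        by (simp add: card_cartesian_product)
    qed
    also have "\<dots> \<le> q * (t * t)" by simp
    finally show ?thesis .
  qed
  moreover have "card (bad_pairs t) \<le> card ?B1 + card ?B2"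
    by (rule order_trans[OF card_mono[OF _ sub] card_Un_le]) simp
  ultimately show ?thesis by linarith
qed

lemma transversal_of_separated:
  assumes sub: "I \<subseteq> {1..q * M}" and ne: "I \<noteq> {}"
    and sep: "\<And>x y. x \<in> I \<Longrightarrow> y \<in> I \<Longrightarrow> x < y \<Longrightarrow> copy_idx x = copy_idx y \<and> block_idx x \<noteq> block_idx y"
  obtains u where "u < q" "block_idx ` I \<subseteq> {1..m}" "I \<in> transversals u (block_idx ` I)"
proof -
  obtain x0 where x0: "x0 \<in> I" using ne by auto
  define u where "u = copy_idx x0"
  have copy_u: "copy_idx x = u" if x: "x \<in> I" for x
  proof (cases x x0 rule: linorder_cases)
    case less then show ?thesis using sep[OF x x0] unfolding u_def by blast
  next
    case equal then show ?thesis unfolding u_def by simp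
  next
    case greater then show ?thesis using sep[OF x0 x] unfolding u_def by simp
  qed
  have block_inj: "x = y" if xy: "x \<in> I" "y \<in> I" "block_idx x = block_idx y" for x y
  proof (cases x y rule: linorder_cases)
    case less then show ?thesis using sep[OF xy(1,2)] xy(3) by blast
  next
    case greater then show ?thesis using sep[OF xy(2,1)] xy(3) by simp
  qed
  have one: "1 \<le> x" if "x \<in> I" for x using sub that by auto
  have "x0 \<in> {1..q * M}" using sub x0 by blast
  then have "x0 - 1 < q * M" by auto
  then have u_lt: "u < q" unfolding u_def copy_idx_def using M_pos by (simp add: div_less_iff_less_mult)
  have J_sub: "block_idx ` I \<subseteq> {1..m}" using mem_block(2) one by auto
  have in_block: "x \<in> block u (block_idx x)" if "x \<in> I" for x
    using mem_block(1)[OF one[OF that]] copy_u[OF that] by simp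
  have "I \<in> transversals u (block_idx ` I)" unfolding transversals_def
  proof (intro CollectI conjI ballI)
    show "I \<subseteq> \<Union> (block u ` block_idx ` I)" using in_block by blast
    fix e assume "e \<in> block_idx ` I"
    then obtain x1 where x1: "x1 \<in> I" "e = block_idx x1" by auto
    have e: "e \<in> {1..m}" using mem_block(2) one x1 by auto
    have "I \<inter> block u e = {x1}"
    proof
      show "I \<inter> block u e \<subseteq> {x1}"
      proof
        fix z assume "z \<in> I \<inter> block u e"
        then have "z \<in> I" "block_idx z = e" using block_memD(2)[OF e] by auto
        then show "z \<in> {x1}" using block_inj[of z x1] x1 by simp
      qed
      show "{x1} \<subseteq> I \<inter> block u e" using in_block x1 by simp
    qed
    then show "card (I \<inter> block u e) = 1" by simp
  qed
  with u_lt J_sub show thesis by (rule that)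
qed
lemma windowed_set_cases:
  assumes I: "I \<subseteq> {1..n}" "card I = k" "1 \<le> k" "width I \<le> t"
  obtains x where "x \<in> I" "q * M < x"
    | x y where "(x, y) \<in> bad_pairs t" "x \<in> I" "y \<in> I"
    | u J where "u < q" "J \<subseteq> {1..m}" "card J = k" "width J \<le> t div c + 2" "I \<in> transversals u J"
proof -
  have fI: "finite I" and ne: "I \<noteq> {}" using I finite_subset by auto
  show ?thesis
  proof (cases "\<exists>x\<in>I. q * M < x")
    case True
    then show ?thesis using that(1) by blast
  next
    case False
    then have IqM: "I \<subseteq> {1..q * M}" using I(1) by fastforce
    show ?thesis
    proof (cases "\<exists>x\<in>I. \<exists>y\<in>I. x < y \<and> (copy_idx x \<noteq> copy_idx y \<or> block_idx x = block_idx y)")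
      case True
      then obtain x y where xy: "x \<in> I" "y \<in> I" "x < y"
        "copy_idx x \<noteq> copy_idx y \<or> block_idx x = block_idx y" by blast
      have "y \<le> Max I" "Min I \<le> x" using fI xy by auto
      then have "y < x + t" using I(4) unfolding width_def by auto
      then have "(x, y) \<in> bad_pairs t" using xy IqM unfolding bad_pairs_def by auto
      then show ?thesis using that(2) xy by blast
    next
      case False
      then obtain u where u: "u < q" "block_idx ` I \<subseteq> {1..m}" "I \<in> transversals u (block_idx ` I)"
        using transversal_of_separated[OF IqM ne] by blast
      have "card (block_idx ` I) = k" using card_transversal[OF u(2,3)] I(2) by simp
      moreover have "(width (block_idx ` I) - 2) * c \<le> t"
        using width_transversal_ge[OF u(2,3)] ne I(4) by simp
      then have "width (block_idx ` I) - 2 \<le> t div c"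
        using cpos by (simp add: less_eq_div_iff_mult_less_eq)
      then have "width (block_idx ` I) \<le> t div c + 2" by simp
      ultimately show ?thesis using that(3) u by blast
    qed
  qed
qed

lemma windowed_count_blowup_le:
  assumes k: "1 \<le> k"
    and transfer: "\<And>u J I. u < q \<Longrightarrow> J \<subseteq> {1..m} \<Longrightarrow> I \<in> transversals u J \<Longrightarrow> P I = Ps J"
  shows "windowed_count n k t P \<le> q * c ^ k * windowed_count m k (t div c + 2) Ps
           + (n - q * M) * ((2 * t + 1) choose (k - 1)) + (n * c + q * (t * t)) * ((2 * t + 1) choose (k - 2))"
proof -
  let ?SI = "{I. I \<subseteq> {1..n} \<and> card I = k \<and> width I \<le> t \<and> P I}"
  let ?SJ = "{J. J \<subseteq> {1..m} \<and> card J = k \<and> width J \<le> t div c + 2 \<and> Ps J}"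
  let ?X = "{0..<q} \<times> ?SJ"
  let ?G = "\<Union>p\<in>?X. transversals (fst p) (snd p)"
  let ?S1 = "\<lambda>x. {I. I \<subseteq> {x - t .. x + t} \<and> card I = k \<and> {x} \<subseteq> I}"
  let ?S2 = "\<lambda>x y. {I. I \<subseteq> {x - t .. x + t} \<and> card I = k \<and> {x, y} \<subseteq> I}"
  let ?B1 = "\<Union>x\<in>{q*M+1..n}. ?S1 x"
  let ?B2 = "\<Union>p\<in>bad_pairs t. ?S2 (fst p) (snd p)"
  have card_X: "card (transversals (fst p) (snd p)) = c ^ k" if "p \<in> ?X" for p
    using card_transversals[of "snd p" "fst p"] that by auto
  have fX: "finite ?X" using finite_subsets_atLeastAtMost by auto
  have fG: "finite ?G"
  proof (rule finite_UN_I[OF fX])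
    fix p assume "p \<in> ?X"
    then show "finite (transversals (fst p) (snd p))"
      by (intro card_ge_0_finite) (simp add: card_X cpos)
  qed
  have fS: "finite {I. I \<subseteq> {x - t .. x + t} \<and> Q I}" for x Q
    by (rule finite_subset[of _ "Pow {x - t .. x + t}"]) auto
  have fB: "finite ?B1" "finite ?B2" using fS finite_bad_pairs by auto
  have sub: "?SI \<subseteq> ?G \<union> ?B1 \<union> ?B2"
  proof
    fix I assume "I \<in> ?SI"
    then have I: "I \<subseteq> {1..n}" "card I = k" "width I \<le> t" "P I" by auto
    have fI: "finite I" using I(1) finite_subset by blast
    have win: "I \<in> {I. I \<subseteq> {x - t .. x + t} \<and> card I = k \<and> X \<subseteq> I}" if "x \<in> X" "X \<subseteq> I" for x X
    proof -
      have "z \<in> {x - t .. x + t}" if "z \<in> I" for z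
        using dist_le_width[OF fI _ that I(3), of x] \<open>x \<in> X\<close> \<open>X \<subseteq> I\<close> by auto
      then show ?thesis using I(2) \<open>X \<subseteq> I\<close> by blast
    qed
    from I(1,2) k I(3) show "I \<in> ?G \<union> ?B1 \<union> ?B2"
    proof (rule windowed_set_cases)
      fix x assume x: "x \<in> I" "q * M < x"
      then have "x \<in> {q*M+1..n}" using I(1) by auto
      moreover have "I \<in> ?S1 x" using win[of x "{x}"] x by simp
      ultimately show ?thesis by blast
    next
      fix x y assume xy: "(x, y) \<in> bad_pairs t" "x \<in> I" "y \<in> I"
      then have "I \<in> ?S2 x y" using win[of x "{x, y}"] by simp
      then have "I \<in> ?B2" using xy(1) by (intro UN_I[of "(x, y)"]) simp_all
      then show ?thesis by blast
    next
      fix u J assume uJ: "u < q" "J \<subseteq> {1..m}" "card J = k" "width J \<le> t div c + 2"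
        "I \<in> transversals u J"
      then have "(u, J) \<in> ?X" using transfer I(4) by auto
      then have "I \<in> ?G" using uJ(5) by (intro UN_I[of "(u, J)"]) simp_all
      then show ?thesis by blast
    qed
  qed
  have "card ?G \<le> (\<Sum>p\<in>?X. card (transversals (fst p) (snd p)))" by (rule card_UN_le[OF fX])
  also have "\<dots> = q * c ^ k * windowed_count m k (t div c + 2) Ps"
    using card_X unfolding windowed_count_def by (simp add: card_cartesian_product)
  finally have G: "card ?G \<le> q * c ^ k * windowed_count m k (t div c + 2) Ps" .
  have "card ?B1 \<le> card {q*M+1..n} * ((2 * t + 1) choose (k - 1))"
    by (rule card_UN_window_supersets_le) auto
  then have B1: "card ?B1 \<le> (n - q * M) * ((2 * t + 1) choose (k - 1))" by simp
  have "card ?B2 \<le> card (bad_pairs t) * ((2 * t + 1) choose (k - 2))"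
    by (rule card_UN_window_supersets_le[OF finite_bad_pairs]) (auto simp: bad_pairs_def)
  then have B2: "card ?B2 \<le> (n * c + q * (t * t)) * ((2 * t + 1) choose (k - 2))"
    using card_bad_pairs by (meson le_trans mult_le_mono1)
  have "card ?SI \<le> card (?G \<union> ?B1 \<union> ?B2)" by (rule card_mono[OF _ sub]) (use fG fB in simp)
  also have "\<dots> \<le> card (?G \<union> ?B1) + card ?B2" by (rule card_Un_le)
  also have "\<dots> \<le> card ?G + card ?B1 + card ?B2" using card_Un_le[of ?G ?B1] by simp
  finally show ?thesis using G B1 B2 unfolding windowed_count_def by linarith
qed

lemma windowed_ratio_blowup_deviation:
  fixes pat :: "nat list"
  assumes k: "1 \<le> k" and Hc: "H * c \<le> t" and q1: "1 \<le> q"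
    and W_pos: "0 < windowed_count m k H (\<lambda>_. True)"
  defines "X \<equiv> real (windowed_count n k t (occurrence pat (blowup sg c q n)))"
    and "Y \<equiv> real (windowed_count n k t (\<lambda>_. True))"
    and "A \<equiv> real (windowed_count m k H (occurrence pat sg))"
    and "W \<equiv> real (windowed_count m k H (\<lambda>_. True))"
    and "D \<equiv> real (windowed_count m k (t div c + 2) (\<lambda>_. True)) - real (windowed_count m k H (\<lambda>_. True))"
    and "Q \<equiv> real (q * c ^ k)"
    and "B \<equiv> real ((n - q * M) * ((2 * t + 1) choose (k - 1))
      + (n * c + q * (t * t)) * ((2 * t + 1) choose (k - 2)))"
  shows "\<bar>X / Y - A / W\<bar> \<le> (Q * D + B) / (Q * W)"
proof -
  let ?A' = "real (windowed_count m k (t div c + 2) (occurrence pat sg))"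
  let ?W' = "real (windowed_count m k (t div c + 2) (\<lambda>_. True))"
  have Q_pos: "0 < Q" unfolding Q_def using q1 cpos by simp
  have "H \<le> t div c" using Hc cpos by (simp add: less_eq_div_iff_mult_less_eq)
  then have H_le: "H \<le> t div c + 2" by simp
  have QA_X: "Q * A \<le> X"
    using windowed_count_blowup_ge[OF k Hc, of "occurrence pat (blowup sg c q n)" "occurrence pat sg"]
      occurrence_transversal_iff
    unfolding Q_def A_def X_def by (simp only: of_nat_mult[symmetric] of_nat_le_iff)
  have QW_Y: "Q * W \<le> Y"
    using windowed_count_blowup_ge[OF k Hc, of "\<lambda>_. True" "\<lambda>_. True"]
    unfolding Q_def W_def Y_def by (simp only: of_nat_mult[symmetric] of_nat_le_iff)
  have X_le: "X \<le> Q * ?A' + B"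
    using windowed_count_blowup_le[OF k, of "occurrence pat (blowup sg c q n)" "occurrence pat sg" t]
      occurrence_transversal_iff
    unfolding Q_def B_def X_def
    by (simp only: of_nat_mult[symmetric] of_nat_add[symmetric] of_nat_le_iff add.assoc)
  have Y_le: "Y \<le> Q * ?W' + B"
    using windowed_count_blowup_le[OF k, of "\<lambda>_. True" "\<lambda>_. True" t] unfolding Q_def B_def Y_def
    by (simp only: of_nat_mult[symmetric] of_nat_add[symmetric] of_nat_le_iff add.assoc)
  have "?A' + W \<le> A + ?W'"
    using windowed_count_increment_le[OF H_le, of m k "occurrence pat sg"] unfolding A_def W_def
    by (simp only: of_nat_add[symmetric] of_nat_le_iff)
  then have "Q * ?A' \<le> Q * (A + D)" using Q_pos unfolding D_def W_def by (intro mult_left_mono) auto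
  moreover have "Q * ?W' = Q * (W + D)" unfolding D_def W_def by simp
  moreover have "A \<le> W" "X \<le> Y" "0 \<le> A"
    unfolding A_def W_def X_def Y_def by (simp_all add: windowed_count_le_all)
  moreover have "0 < W" using W_pos unfolding W_def by simp
  ultimately have "\<bar>X / Y - (Q * A) / (Q * W)\<bar> \<le> (Q * D + B) / (Q * W)"
    using Q_pos QA_X QW_Y X_le Y_le by (intro ratio_diff_le) (simp_all add: algebra_simps)
  then show ?thesis using Q_pos by simp
qed

lemma windowed_ratio_blowup_close:
  fixes pat :: "nat list" and H t :: nat
  defines "k \<equiv> length pat" and "s \<equiv> t div c"
  assumes k2: "2 \<le> k" and Hk: "2 * k \<le> H" and Hm: "2 * H \<le> m" and Hc: "H * c \<le> t" and q1: "1 \<le> q"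
    and n_le: "n \<le> q * M + M" and sH: "s + 2 \<le> 2 * H" and ts: "t \<le> c * (s + 1)"
  shows "\<bar>real (windowed_count n k t (occurrence pat (blowup sg c q n))) / real (windowed_count n k t (\<lambda>_. True))
      - real (windowed_count m k H (occurrence pat sg)) / real (windowed_count m k H (\<lambda>_. True))\<bar>
    \<le> blowup_error_const k * (real (s + 2 - H) / real H + 1 / real q + 1 / real H + real H / real m)"
proof -
  have H4: "4 \<le> H" using k2 Hk by simp
  have Hs: "H \<le> s" using Hc cpos unfolding s_def by (simp add: less_eq_div_iff_mult_less_eq)
  have W_ge: "real m / 2 * (real H / (2 * real k)) ^ (k - 1) \<le> real (windowed_count m k H (\<lambda>_. True))"
    by (rule windowed_count_ge_real[OF k2 Hk Hm])
  moreover have "0 < real m / 2 * (real H / (2 * real k)) ^ (k - 1)" using mpos H4 k2 by simp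
  ultimately have W_pos: "0 < windowed_count m k H (\<lambda>_. True)" by linarith
  have D_le: "real (windowed_count m k (s + 2) (\<lambda>_. True)) - real (windowed_count m k H (\<lambda>_. True))
      \<le> real m * real (s + 2 - H) * (2 * real H) ^ (k - 2)"
    using windowed_count_widen_real_le[OF k2 _ Hs sH] H4 by simp
  have "c * (s + 1) \<le> c * (2 * H)" using sH by (intro mult_le_mono2) simp
  then have "t \<le> 2 * c * H" using ts by (simp add: ac_simps)
  then have B_le: "real ((n - q * M) * ((2 * t + 1) choose (k - 1)) + (n * c + q * (t * t)) * ((2 * t + 1) choose (k - 2)))
      \<le> real c * real m * (6 * real c * real H) ^ (k - 1)
        + (2 * real q * real c * real m * real c + real q * (2 * real c * real H) ^ 2) * (6 * real c * real H) ^ (k - 2)"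
    using blowup_boundary_le[OF q1 _ _ n_le] cpos H4 by simp
  have "H * c \<le> t" by (rule Hc)
  from windowed_ratio_blowup_deviation[OF _ this q1 W_pos, of pat]
  have "\<bar>real (windowed_count n k t (occurrence pat (blowup sg c q n))) / real (windowed_count n k t (\<lambda>_. True))
      - real (windowed_count m k H (occurrence pat sg)) / real (windowed_count m k H (\<lambda>_. True))\<bar>
    \<le> (real (q * c ^ k) * (real (windowed_count m k (s + 2) (\<lambda>_. True)) - real (windowed_count m k H (\<lambda>_. True)))
        + real ((n - q * M) * ((2 * t + 1) choose (k - 1)) + (n * c + q * (t * t)) * ((2 * t + 1) choose (k - 2))))
      / (real (q * c ^ k) * real (windowed_count m k H (\<lambda>_. True)))"
    using k2 unfolding s_def k_def by simp
  also have "\<dots> \<le> blowup_error_const k * (real (s + 2 - H) / real H + 1 / real q + 1 / real H + real H / real m)"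
    using cpos windowed_count_mono[of H "s + 2" m k "\<lambda>_. True"] Hs
    by (intro blowup_error_le[OF k2 H4 mpos _ q1 _ W_ge _ D_le _ B_le]) auto
  finally show ?thesis .
qed

end

text \<open>The inflation factor c = t div H matches the scale t = nat (floor T) of the blow-up with
  the scale H = nat (floor h) of sg; as many copies as fit are placed side by side.\<close>
definition scaled_blowup :: "nat list \<Rightarrow> real \<Rightarrow> real \<Rightarrow> nat \<Rightarrow> nat list" where
  "scaled_blowup sg h T n =
     (let c = nat \<lfloor>T\<rfloor> div nat \<lfloor>h\<rfloor> in blowup sg c (n div (c * length sg)) n)"

lemma length_scaled_blowup: "length (scaled_blowup sg h T n) = n"
  unfolding scaled_blowup_def blowup_def by (simp add: Let_def)

lemma is_perm_scaled_blowup: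
  assumes "is_perm sg"
  shows "is_perm (scaled_blowup sg h T n)"
proof -
  define c where "c = nat \<lfloor>T\<rfloor> div nat \<lfloor>h\<rfloor>"
  have "is_perm (blowup sg c (n div (c * length sg)) n)"
  proof (cases "c * length sg = 0")
    case True
    then have "blowup sg c (n div (c * length sg)) n = map Suc [0..<n]"
      unfolding blowup_def blowup_val_def True by simp
    then show ?thesis unfolding is_perm_def
      by (auto simp: distinct_map image_Suc_atLeastLessThan atLeastLessThanSuc_atLeastAtMost)
  next
    case False
    interpret blowup_setting sg c "n div (c * length sg)" n
      by unfold_locales (use assms False in \<open>auto simp: mult.commute[of "n div _"]\<close>)
    show ?thesis by (rule is_perm_blowup)
  qed
  then show ?thesis unfolding scaled_blowup_def c_def Let_def .
qed

lemma inflation_factor_bounds: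
  fixes H t i :: nat
  defines "c \<equiv> t div H"
  defines "s \<equiv> t div c"
  assumes H: "4 \<le> H" and i: "1 \<le> i" and t: "(i + 1) * H \<le> t"
  shows "i + 1 \<le> c" "H * c \<le> t" "H \<le> s" "(s - H) * (i + 1) < H" "s + 2 \<le> 2 * H"
    "t \<le> c * (s + 1)"
proof -
  show c_ge: "i + 1 \<le> c" unfolding c_def using t H by (simp add: less_eq_div_iff_mult_less_eq)
  then have c_pos: "0 < c" by simp
  show Hc: "H * c \<le> t" unfolding c_def by (rule times_div_less_eq_dividend)
  show Hs: "H \<le> s" unfolding s_def using Hc c_pos by (simp add: less_eq_div_iff_mult_less_eq)
  have sc: "s * c \<le> t" unfolding s_def by (rule div_times_less_eq_dividend)
  have tc: "t < c * H + H"
    using div_mult_mod_eq[of t H] mod_less_divisor[of H t] H unfolding c_def by linarith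
  have "H * c \<le> s * c" using Hs by (rule mult_le_mono1)
  then have "(s - H) * c < H"
    unfolding diff_mult_distrib using sc tc mult.commute[of c H] by linarith
  moreover have "(s - H) * (i + 1) \<le> (s - H) * c" using c_ge by (rule mult_le_mono2)
  ultimately show sH: "(s - H) * (i + 1) < H" by linarith
  have "(s - H) * 2 \<le> (s - H) * (i + 1)" using i by (intro mult_le_mono2) simp
  then show "s + 2 \<le> 2 * H" using sH H Hs by linarith
  have "t div c * c + t mod c = t" by (rule div_mult_mod_eq)
  moreover have "t mod c < c" using c_pos by simp
  moreover have "c * (s + 1) = s * c + c" by simp
  ultimately show "t \<le> c * (s + 1)" unfolding s_def by linarith
qed

lemma copy_count_bounds:
  fixes M n i :: nat
  defines "q \<equiv> n div M"
  assumes M: "0 < M" and i: "1 \<le> i" and n: "(i + 1) * M \<le> 2 * n"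
  shows "1 \<le> q" "i + 1 \<le> 4 * q" "q * M \<le> n" "n \<le> q * M + M"
proof -
  have "M * (2 * ((i + 1) div 2)) \<le> M * (i + 1)" by (intro mult_le_mono2) simp
  then have "M * ((i + 1) div 2) \<le> n" using n by (simp add: mult.commute)
  then have "(i + 1) div 2 \<le> q" unfolding q_def using M
    by (simp add: less_eq_div_iff_mult_less_eq mult.commute)
  then show q4: "i + 1 \<le> 4 * q" using i by linarith
  then show "1 \<le> q" using i by linarith
  show "q * M \<le> n" unfolding q_def by (rule div_times_less_eq_dividend)
  show "n \<le> q * M + M"
    using div_mult_mod_eq[of n M] mod_less_divisor[OF M, of n] unfolding q_def by linarith
qed

lemma blowup_error_terms_le:
  fixes s H q i m :: nat and h :: real
  assumes "(s - H) * (i + 1) < H" "H \<le> s" "i + 1 \<le> 4 * q" "0 < H" "real H \<le> h" "0 < m"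
  shows "real (s + 2 - H) / real H + 1 / real q + 1 / real H + real H / real m
    \<le> 5 / real (i + 1) + 3 / real H + h / real m"
proof -
  have "real ((s - H) * (i + 1)) \<le> real H" using assms(1) by (simp only: of_nat_le_iff)
  then have "real (s - H) * real (i + 1) \<le> real H" by (simp only: of_nat_mult)
  then have "real (s - H) \<le> real H / real (i + 1)" by (simp add: field_simps)
  moreover have "real (s + 2 - H) = real (s - H) + 2" using assms(2) by simp
  ultimately have "real (s + 2 - H) \<le> real H / real (i + 1) + 2" by simp
  then have "real (s + 2 - H) / real H \<le> (real H / real (i + 1) + 2) / real H"
    using assms(4) by (intro divide_right_mono) auto
  also have "\<dots> = 1 / real (i + 1) + 2 / real H" using assms(4) by (simp add: field_simps)
  finally have "real (s + 2 - H) / real H \<le> 1 / real (i + 1) + 2 / real H" .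
  moreover have "1 / real q \<le> 4 / real (i + 1)"
  proof -
    have "real (i + 1) \<le> 4 * real q" using assms(3) by (metis of_nat_le_iff of_nat_mult of_nat_numeral)
    then show ?thesis using assms(3) by (simp add: field_simps)
  qed
  moreover have "real H / real m \<le> h / real m" using assms(5,6) by (intro divide_right_mono) auto
  moreover have "4 / real (i + 1) = 4 * (1 / real (i + 1))" "5 / real (i + 1) = 5 * (1 / real (i + 1))"
    "2 / real H = 2 * (1 / real H)" "3 / real H = 3 * (1 / real H)" by simp_all
  ultimately show ?thesis by linarith
qed

lemma rho_scaled_blowup_close:
  fixes sg pat :: "nat list" and h T :: real and n i :: nat
  assumes perm: "is_perm sg" and k2: "2 \<le> length pat" and hk: "2 * real (length pat) \<le> h"
    and hm: "2 * h \<le> real (length sg)" and i1: "1 \<le> i"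
    and T_ge: "real (i + 2) * h \<le> T" and n_ge: "T * real (i + 1) * real (length sg) \<le> real n * h"
  shows "\<bar>rho T pat (scaled_blowup sg h T n) - rho h pat sg\<bar>
    \<le> blowup_error_const (length pat) * (5 / real (i + 1) + 3 / real (nat \<lfloor>h\<rfloor>) + h / real (length sg))"
proof -
  define m k H t where "m = length sg" and "k = length pat" and "H = nat \<lfloor>h\<rfloor>" and "t = nat \<lfloor>T\<rfloor>"
  define c where "c = t div H"
  define q s where "q = n div (c * m)" and "s = t div c"
  have h0: "0 < h" using hk k2 by simp
  have Hh: "real H \<le> h" "h < real H + 1" unfolding H_def using h0 by linarith+
  have Hk: "2 * k \<le> H" using hk unfolding H_def k_def by linarith
  have H4: "4 \<le> H" using Hk k2 unfolding k_def by simp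
  have Hm: "2 * H \<le> m" using hm Hh unfolding m_def by linarith
  have m0: "0 < m" using Hm H4 by simp
  have "0 \<le> real (i + 2) * h" using h0 by simp
  with T_ge have T0: "0 \<le> T" by linarith
  have tT: "real t \<le> T" "T < real t + 1" unfolding t_def using T0 by linarith+
  have "real (i + 1) * real H \<le> real (i + 1) * h" using Hh by (intro mult_left_mono) auto
  then have "real (i + 1) * real H + 1 \<le> T" using T_ge Hh H4 by (simp add: algebra_simps)
  then have "real (i + 1) * real H < real t" using tT by linarith
  then have "real ((i + 1) * H) < real t" by (simp only: of_nat_mult)
  then have "(i + 1) * H < t" by (simp only: of_nat_less_iff)
  then have tiH: "(i + 1) * H \<le> t" by simp
  note cb = inflation_factor_bounds[OF H4 i1 tiH, folded c_def, folded s_def]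
  have "real (H * c) \<le> real t" using cb(2) by (simp only: of_nat_le_iff)
  then have "real (H * c) * real (i + 1) * real m \<le> T * real (i + 1) * real m"
    using tT by (intro mult_right_mono) auto
  also have "\<dots> \<le> real n * h" using n_ge unfolding m_def .
  also have "\<dots> \<le> real n * (2 * real H)" using Hh H4 by (intro mult_left_mono) auto
  finally have "real ((i + 1) * (c * m)) * real H \<le> real (2 * n) * real H" by (simp add: algebra_simps)
  then have iM: "(i + 1) * (c * m) \<le> 2 * n" using H4 by (simp only: mult_le_cancel_right of_nat_le_iff)
  have cm0: "0 < c * m" using cb(1) m0 by simp
  note qb = copy_count_bounds[OF cm0 i1 iM, folded q_def]
  interpret blowup_setting sg c q n
    by unfold_locales (use perm cm0 qb(3) in \<open>auto simp: m_def\<close>)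
  have "rho T pat (scaled_blowup sg h T n) = real (windowed_count n k t (occurrence pat (blowup sg c q n)))
      / real (windowed_count n k t (\<lambda>_. True))"
    using rho_eq_windowed_count[OF T0, of pat "blowup sg c q n"] blowup_length
    unfolding scaled_blowup_def Let_def c_def q_def t_def H_def k_def m_def by simp
  moreover have "rho h pat sg = real (windowed_count m k H (occurrence pat sg))
      / real (windowed_count m k H (\<lambda>_. True))"
    using rho_eq_windowed_count[of h pat sg] h0 unfolding H_def k_def m_def by simp
  ultimately have "\<bar>rho T pat (scaled_blowup sg h T n) - rho h pat sg\<bar>
      \<le> blowup_error_const k * (real (s + 2 - H) / real H + 1 / real q + 1 / real H + real H / real m)"
    using windowed_ratio_blowup_close[of pat H t] k2 Hk Hm cb qb
    unfolding k_def m_def s_def by simp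
  also have "\<dots> \<le> blowup_error_const k * (5 / real (i + 1) + 3 / real H + h / real m)"
    using blowup_error_terms_le[OF cb(4,3) qb(2) _ Hh(1) m0] H4
    by (intro mult_left_mono blowup_error_const_nonneg) simp_all
  finally show ?thesis unfolding k_def H_def m_def .
qed

lemma scaled_lengths_exist:
  assumes "scaling_function f"
  obtains n :: "nat \<Rightarrow> nat" where "\<And>i. i \<le> n i"
    "\<And>i. 0 < h i \<Longrightarrow> 0 < m i \<Longrightarrow>
       real (i + 2) * h i \<le> f (n i) \<and> f (n i) * real (i + 1) * real (m i) \<le> real (n i) * h i"
proof -
  define good where "good i N \<longleftrightarrow> i \<le> N \<and> (0 < h i \<longrightarrow> 0 < m i \<longrightarrow>
      real (i + 2) * h i \<le> f N \<and> f N * real (i + 1) * real (m i) \<le> real N * h i)" for i N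
  have "\<exists>N. good i N" for i
  proof (cases "0 < h i \<and> 0 < m i")
    case True
    have f_top: "filterlim f at_top sequentially" and f_small: "(\<lambda>n. f n / real n) \<longlonglongrightarrow> 0"
      using assms unfolding scaling_function_def by auto
    have bound_pos: "0 < h i / (real (i + 1) * real (m i))" using True by simp
    have "eventually (\<lambda>N. i \<le> N \<and> 1 \<le> N \<and> real (i + 2) * h i \<le> f N
        \<and> f N / real N < h i / (real (i + 1) * real (m i))) sequentially"
      using f_top order_tendstoD(2)[OF f_small bound_pos]
      by (intro eventually_conj eventually_ge_at_top) (auto simp: filterlim_at_top)
    then obtain N where N: "i \<le> N" "1 \<le> N" "real (i + 2) * h i \<le> f N"
      "f N / real N < h i / (real (i + 1) * real (m i))"
      unfolding eventually_sequentially by blast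
    define b where "b = real (i + 1) * real (m i)"
    have b_pos: "0 < b" unfolding b_def using True by simp
    have N_pos: "0 < real N" using N(2) by simp
    have "f N = f N / real N * real N" using N_pos by simp
    also have "\<dots> \<le> h i / b * real N" using N(4) N_pos unfolding b_def by (intro mult_right_mono) auto
    finally have "f N * b \<le> h i / b * real N * b" using b_pos by (intro mult_right_mono) auto
    also have "\<dots> = real N * h i" using b_pos by simp
    finally have "f N * real (i + 1) * real (m i) \<le> real N * h i" unfolding b_def by (simp add: mult.assoc)
    with N show ?thesis unfolding good_def by blast
  qed (auto simp: good_def)
  then have "good i (SOME N. good i N)" for i by (rule someI_ex)
  then show thesis by (intro that[of "\<lambda>i. SOME N. good i N"]) (simp_all add: good_def)
qed

lemma blowup_error_tendsto_zero:
  fixes h :: "nat \<Rightarrow> real" and m :: "nat \<Rightarrow> nat"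
  assumes h_top: "filterlim h at_top sequentially" and h_small: "(\<lambda>i. h i / real (m i)) \<longlonglongrightarrow> 0"
  shows "(\<lambda>i. blowup_error_const k * (5 / real (i + 1) + 3 / real (nat \<lfloor>h i\<rfloor>) + h i / real (m i)))
    \<longlonglongrightarrow> 0"
proof -
  have "(\<lambda>i. 5 / real (i + 1)) \<longlonglongrightarrow> 0"
    using tendsto_mult_right_zero[OF LIMSEQ_inverse_real_of_nat, of 5] by (simp add: divide_inverse)
  moreover have "filterlim (\<lambda>i. - 1 + h i) at_top sequentially"
    by (rule filterlim_tendsto_add_at_top[OF tendsto_const h_top])
  then have "filterlim (\<lambda>i. real (nat \<lfloor>h i\<rfloor>)) at_top sequentially"
    by (rule filterlim_at_top_mono) (intro always_eventually allI, linarith)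
  then have "(\<lambda>i. 3 / real (nat \<lfloor>h i\<rfloor>)) \<longlonglongrightarrow> 0"
    by (intro tendsto_divide_0[OF tendsto_const] filterlim_at_top_imp_at_infinity)
  ultimately have "(\<lambda>i. 5 / real (i + 1) + 3 / real (nat \<lfloor>h i\<rfloor>) + h i / real (m i)) \<longlonglongrightarrow> 0 + 0 + 0"
    using h_small by (intro tendsto_add)
  from tendsto_mult_left[OF this, of "blowup_error_const k"] show ?thesis by simp
qed

lemma eventually_scale_conditions:
  fixes h :: "nat \<Rightarrow> real" and m :: "nat \<Rightarrow> nat"
  assumes m_top: "filterlim m at_top sequentially" and h_top: "filterlim h at_top sequentially"
    and h_small: "(\<lambda>i. h i / real (m i)) \<longlonglongrightarrow> 0"
  shows "eventually (\<lambda>i. 1 \<le> i \<and> 1 \<le> m i \<and> Z \<le> h i \<and> 2 * h i \<le> real (m i)) sequentially"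
proof -
  have "eventually (\<lambda>i. 1 \<le> m i) sequentially" using m_top unfolding filterlim_at_top by auto
  moreover have "eventually (\<lambda>i. Z \<le> h i) sequentially" using h_top unfolding filterlim_at_top by auto
  moreover have "eventually (\<lambda>i. h i / real (m i) < 1 / 2) sequentially"
    by (rule order_tendstoD(2)[OF h_small]) simp
  moreover have "eventually (\<lambda>i. 1 \<le> i) sequentially" by (rule eventually_ge_at_top)
  ultimately show ?thesis by eventually_elim (simp add: divide_less_eq)
qed

lemma rho_scaled_blowup_tendsto:
  fixes sg :: "nat \<Rightarrow> nat list" and h f :: "nat \<Rightarrow> real" and n :: "nat \<Rightarrow> nat"
  defines "m i \<equiv> length (sg i)"
  assumes perm: "\<And>i. is_perm (sg i)"
    and m_top: "filterlim m at_top sequentially"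
    and h_top: "filterlim h at_top sequentially"
    and h_small: "(\<lambda>i. h i / real (m i)) \<longlonglongrightarrow> 0"
    and n_ge: "\<And>i. i \<le> n i"
    and n_good: "\<And>i. 0 < h i \<Longrightarrow> 0 < m i \<Longrightarrow>
      real (i + 2) * h i \<le> f (n i) \<and> f (n i) * real (i + 1) * real (m i) \<le> real (n i) * h i"
    and pat: "pat \<in> Perms"
  shows "(\<lambda>i. rho (f (n i)) pat (scaled_blowup (sg i) (h i) (f (n i)) (n i)) - rho (h i) pat (sg i))
    \<longlonglongrightarrow> 0"
proof (cases "length pat = 1")
  case True
  have "eventually (\<lambda>i. rho (f (n i)) pat (scaled_blowup (sg i) (h i) (f (n i)) (n i))
      - rho (h i) pat (sg i) = 0) sequentially"
    using eventually_scale_conditions[OF m_top h_top h_small, of 1]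
  proof eventually_elim
    case (elim i)
    then have "1 * 1 \<le> real (i + 2) * h i" by (intro mult_mono) auto
    then have "1 \<le> f (n i)" using n_good[of i] elim by simp
    moreover have "1 \<le> length (scaled_blowup (sg i) (h i) (f (n i)) (n i))"
      using n_ge[of i] elim by (simp add: length_scaled_blowup)
    ultimately show ?case using rho_singleton_pattern[OF True] elim unfolding m_def by simp
  qed
  then show ?thesis by (rule tendsto_eventually)
next
  case False
  define k where "k = length pat"
  have k2: "2 \<le> k" using False pat unfolding Perms_def k_def by auto
  have "eventually (\<lambda>i. norm (rho (f (n i)) pat (scaled_blowup (sg i) (h i) (f (n i)) (n i))
      - rho (h i) pat (sg i))
    \<le> blowup_error_const k * (5 / real (i + 1) + 3 / real (nat \<lfloor>h i\<rfloor>) + h i / real (m i))) sequentially"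
    using eventually_scale_conditions[OF m_top h_top h_small, of "2 * real k"]
  proof eventually_elim
    case (elim i)
    have "0 < h i" "0 < m i" using elim k2 by auto
    from n_good[OF this] have "real (i + 2) * h i \<le> f (n i)"
      "f (n i) * real (i + 1) * real (m i) \<le> real (n i) * h i" by auto
    then show ?case
      using rho_scaled_blowup_close[OF perm[of i], where pat = pat and h = "h i" and T = "f (n i)"
          and n = "n i" and i = i] elim k2
      unfolding k_def m_def by simp
  qed
  then show ?thesis by (rule Lim_null_comparison[OF _ blowup_error_tendsto_zero[OF h_top h_small]])
qed

lemma converges_at_scale_scaled_blowup:
  fixes sg :: "nat \<Rightarrow> nat list" and g f :: "nat \<Rightarrow> real" and n :: "nat \<Rightarrow> nat"
  defines "h i \<equiv> g (length (sg i))"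
  assumes conv: "converges_at_scale sg g Xi" and g: "scaling_function g"
    and n_ge: "\<And>i. i \<le> n i"
    and n_good: "\<And>i. 0 < h i \<Longrightarrow> 0 < length (sg i) \<Longrightarrow> real (i + 2) * h i \<le> f (n i)
      \<and> f (n i) * real (i + 1) * real (length (sg i)) \<le> real (n i) * h i"
  shows "converges_at_scale (\<lambda>i. scaled_blowup (sg i) (h i) (f (n i)) (n i)) f Xi"
  unfolding converges_at_scale_def length_scaled_blowup
proof (intro conjI allI ballI)
  have perm: "\<And>i. is_perm (sg i)" and m_top: "filterlim (\<lambda>i. length (sg i)) at_top sequentially"
    and lim: "\<And>pat. pat \<in> Perms \<Longrightarrow> (\<lambda>i. rho (h i) pat (sg i)) \<longlonglongrightarrow> Xi pat"
    using conv unfolding converges_at_scale_def h_def by auto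
  have g_top: "filterlim g at_top sequentially" and g_small: "(\<lambda>n. g n / real n) \<longlonglongrightarrow> 0"
    using g unfolding scaling_function_def by auto
  have h_top: "filterlim h at_top sequentially"
    unfolding h_def by (rule filterlim_compose[OF g_top m_top])
  have h_small: "(\<lambda>i. h i / real (length (sg i))) \<longlonglongrightarrow> 0"
    unfolding h_def using filterlim_compose[OF g_small m_top] by simp
  show "is_perm (scaled_blowup (sg i) (h i) (f (n i)) (n i))" for i by (rule is_perm_scaled_blowup[OF perm])
  show "filterlim n at_top sequentially"
    by (rule filterlim_at_top_mono[OF filterlim_ident]) (use n_ge in simp)
  fix pat assume pat: "pat \<in> Perms"
  from tendsto_add[OF rho_scaled_blowup_tendsto[OF perm m_top h_top h_small n_ge n_good pat] lim[OF pat]]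
  show "(\<lambda>i. rho (f (n i)) pat (scaled_blowup (sg i) (h i) (f (n i)) (n i))) \<longlonglongrightarrow> Xi pat"
    by simp
qed

theorem mainTheorem5:
  fixes Xi :: "nat list \<Rightarrow> real" and f :: "nat \<Rightarrow> real"
  assumes "scale_limit Xi" and "scaling_function f"
  shows "\<exists>seq. converges_at_scale seq f Xi"
proof -
  obtain g sg where g: "scaling_function g" and conv: "converges_at_scale sg g Xi"
    using assms(1) unfolding scale_limit_def by blast
  obtain n where "\<And>i. i \<le> n i" and "\<And>i. 0 < g (length (sg i)) \<Longrightarrow> 0 < length (sg i) \<Longrightarrow>
      real (i + 2) * g (length (sg i)) \<le> f (n i)
      \<and> f (n i) * real (i + 1) * real (length (sg i)) \<le> real (n i) * g (length (sg i))"
    by (rule scaled_lengths_exist[OF assms(2), where h = "\<lambda>i. g (length (sg i))"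
        and m = "\<lambda>i. length (sg i)"]) blast
  from converges_at_scale_scaled_blowup[OF conv g this] show ?thesis by blast
qed

end
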